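(* Suppose $\alpha_s=s^{-\eta}$ for some $\eta\in[0,1/2)$. Then, with probability $1$, there exist a constant $K>0$ and a (random) time $T_0$ such that for all $t\ge T_0$, \[ \lambda_{\min}(t)\ge K\sum_{s=1}^t\alpha_s^2, \] i.e. $\lambda_{\min}(t)=\Omega\big(\sum_{s=1}^t\alpha_s^2\big)$.
   Context: At each time $s$, the input is $\mathbf x_s=(\mathbf p_s,\mathbf c_s)\in\mathbb R^d$ with $\mathbf p_s=\bar{\mathbf p}_s+\alpha_s\mathbf u_s\in\mathbb R^m$, where: the contexts $\mathbf c_s\in\mathbb R^{d-m}$ are i.i.d., bounded, with $\Sigma^c=\mathbb E[\mathbf c_s\mathbf c_s^\top]$ positive definite; $\bar{\mathbf p}_s$ (the certainty-equivalent price $\mathbf p_{ce}(\mathbf c_s;\hat{\boldsymbol\beta}_{s-1})$) is a bounded random vector determined by $\mathbf c_s$ and the past; the perturbations $\mathbf u_s\in\mathbb R^m$ are i.i.d., bounded, mean zero, with positive definite covariance, and $\mathbf u_s$ is independent of $\mathbf c_s$ and of everything up to time $s-1$; $\alpha_s>0$ is deterministic. $\lambda_{\min}(t)$ is the minimum eigenvalue of $\sum_{s=1}^t\mathbf x_s\mathbf x_s^\top$. *)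

theory Defs
  imports "HOL-Probability.Probability"
begin

definition outer :: "real ^ 'n \<Rightarrow> real ^ 'n ^ 'n" where
  "outer x = (\<chi> i j. x $ i * x $ j)"

definition min_eig :: "real ^ 'n ^ 'n \<Rightarrow> real" where
  "min_eig A = Min {l. \<exists>v. v \<noteq> 0 \<and> A *v v = l *\<^sub>R v}"

definition pos_def :: "real ^ 'n ^ 'n \<Rightarrow> bool" where
  "pos_def A \<longleftrightarrow> transpose A = A \<and> (\<forall>v. v \<noteq> 0 \<longrightarrow> v \<bullet> (A *v v) > 0)"

definition stack :: "real ^ 'm \<Rightarrow> real ^ 'k \<Rightarrow> real ^ ('m + 'k)" where
  "stack p c = (\<chi> i. case i of Inl j \<Rightarrow> p $ j | Inr j \<Rightarrow> c $ j)"

definition past_ctx :: "'a measure \<Rightarrow> (nat \<Rightarrow> 'a measure) \<Rightarrow> (nat \<Rightarrow> 'a \<Rightarrow> real ^ 'k) \<Rightarrow> nat \<Rightarrow> 'a measure" where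
  "past_ctx M F c s = sigma (space M)
     (sets (F (s - 1)) \<union> {c s -` A \<inter> space M | A. A \<in> sets borel})"

definition gen_sets :: "'a measure \<Rightarrow> ('a \<Rightarrow> 'b::topological_space) \<Rightarrow> 'a set set" where
  "gen_sets M X = {X -` A \<inter> space M | A. A \<in> sets borel}"

end

theory Submission
  imports Defs
begin

(*
  Write x_s = (p_s, c_s) with p_s = pbar_s + alpha_s u_s, and W_t for the sum of the alpha_s^2.
  Along the dyadic times t = 2^k the normalised sums of c_s c_s^T (by t) and of alpha_s^2 u_s u_s^T
  (by W_t) converge almost surely to the second moments of c and u, and the cross terms
  alpha_s pbar_s u_s^T, alpha_s c_s u_s^T are o(W_t): each is a sum of bounded martingale differences,
  whose fourth moment is O(W_t^2), and W_{2^k} >= 2^{k (1 - 2 eta)} grows geometrically because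
  eta < 1/2, so Borel-Cantelli applies.  For v = (v_p, v_c) the quadratic form sum_s (v . x_s)^2 is then
  bounded below both by a multiple of t |v_c|^2 - t |v_p|^2 (the contexts) and by a multiple of
  W_t |v_p|^2 minus a small multiple of W_t |v|^2 (the perturbations); whichever of |v_p|, |v_c|
  dominates, one of the two bounds gives const * W_t |v|^2.  Monotonicity in t and W_{2t} <= 2 W_t
  carry the bound from the dyadic times to all t.
*)

section \<open>Quadratic forms and the least eigenvalue\<close>

lemma symmetric_matrix_inner_commute:
  fixes A :: "real^'n^'n"
  assumes "transpose A = A"
  shows "(A *v v) \<bullet> w = v \<bullet> (A *v w)"
proof -
  have "(A *v v) \<bullet> w = (v v* transpose A) \<bullet> w"
    by (metis transpose_matrix_vector transpose_transpose)
  also have "\<dots> = v \<bullet> (transpose A *v w)" by (rule dot_lmul_matrix)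
  finally show ?thesis using assms by simp
qed

lemma quadratic_form_scaleR:
  fixes A :: "real^'n^'n"
  shows "(r *\<^sub>R v) \<bullet> (A *v (r *\<^sub>R v)) = r\<^sup>2 * (v \<bullet> (A *v v))"
  by (simp add: matrix_scaleR_vector_ac scaleR_matrix_vector_assoc[symmetric] power2_eq_square)

lemma quadratic_form_min_on_sphere:
  fixes A :: "real^'n^'n"
  obtains x where "norm x = 1" and "\<And>v. (x \<bullet> (A *v x)) * (v \<bullet> v) \<le> v \<bullet> (A *v v)"
proof -
  have cont: "continuous_on (sphere 0 1) (\<lambda>v. v \<bullet> (A *v v))"
    by (intro continuous_intros linear_continuous_on matrix_vector_mul_linear)
  obtain x where x: "x \<in> sphere 0 1" and min: "\<forall>y\<in>sphere 0 1. x \<bullet> (A *v x) \<le> y \<bullet> (A *v y)"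
    using continuous_attains_inf[OF compact_sphere _ cont] by auto
  have "(x \<bullet> (A *v x)) * (v \<bullet> v) \<le> v \<bullet> (A *v v)" for v
  proof (cases "v = 0")
    case False
    have "(1 / norm v) *\<^sub>R v \<in> sphere 0 1" using False by simp
    then have "x \<bullet> (A *v x) \<le> ((1 / norm v) *\<^sub>R v) \<bullet> (A *v ((1 / norm v) *\<^sub>R v))"
      using min by blast
    also have "\<dots> = (v \<bullet> (A *v v)) / (norm v)\<^sup>2"
      by (simp only: quadratic_form_scaleR) (simp add: power_divide)
    finally have "x \<bullet> (A *v x) \<le> (v \<bullet> (A *v v)) / (norm v)\<^sup>2" .
    then show ?thesis using False by (simp add: field_simps dot_square_norm)
  qed simp
  with x that show ?thesis by simp
qed

lemma psd_quadratic_form_eq_0_imp_mult_eq_0: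
  fixes B :: "real^'n^'n"
  assumes sym: "transpose B = B" and psd: "\<And>v. 0 \<le> v \<bullet> (B *v v)" and x: "x \<bullet> (B *v x) = 0"
  shows "B *v x = 0"
proof (rule ccontr)
  define w where "w = B *v x"
  assume "B *v x \<noteq> 0"
  then have w: "0 < w \<bullet> w" by (simp add: w_def)
  define c where "c = w \<bullet> (B *v w)"
  have c: "0 \<le> c" using psd by (simp add: c_def)
  define t where "t = - (w \<bullet> w) / (c + 1)"
  have "0 \<le> (x + t *\<^sub>R w) \<bullet> (B *v (x + t *\<^sub>R w))" by (rule psd)
  also have "\<dots> = 2 * t * (w \<bullet> w) + t\<^sup>2 * c"
    using symmetric_matrix_inner_commute[OF sym, of x w] x
    by (simp add: c_def w_def matrix_vector_right_distrib matrix_vector_mult_scaleR inner_add_left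
        inner_add_right inner_commute power2_eq_square algebra_simps)
  also have "\<dots> \<le> 2 * t * (w \<bullet> w) + t\<^sup>2 * (c + 1)" by (simp add: mult_left_mono)
  also have "\<dots> = t * (w \<bullet> w)"
  proof -
    have "t\<^sup>2 * (c + 1) = t * (t * (c + 1))" by (simp add: power2_eq_square)
    also have "t * (c + 1) = - (w \<bullet> w)" using c by (simp add: t_def)
    finally show ?thesis by simp
  qed
  also have "\<dots> < 0" using w c by (simp add: t_def mult_neg_pos)
  finally show False by simp
qed

lemma symmetric_matrix_min_eigenvector:
  fixes A :: "real^'n^'n"
  assumes sym: "transpose A = A"
  obtains x where "norm x = 1" and "A *v x = (x \<bullet> (A *v x)) *\<^sub>R x"
    and "\<And>v. (x \<bullet> (A *v x)) * (v \<bullet> v) \<le> v \<bullet> (A *v v)"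
proof -
  obtain x where x: "norm x = 1" and min: "\<And>v. (x \<bullet> (A *v x)) * (v \<bullet> v) \<le> v \<bullet> (A *v v)"
    using quadratic_form_min_on_sphere[of A] by blast
  define l where "l = x \<bullet> (A *v x)"
  define B where "B = A - l *\<^sub>R mat 1"
  have Bv: "B *v v = A *v v - l *\<^sub>R v" for v
    by (simp add: B_def matrix_vector_mult_diff_rdistrib scaleR_matrix_vector_assoc[symmetric])
  have "transpose B = B" using sym by (simp add: B_def transpose_def mat_def vec_eq_iff)
  moreover have "0 \<le> v \<bullet> (B *v v)" for v
    using min[of v] by (simp add: Bv inner_diff_right l_def)
  moreover have "x \<bullet> (B *v x) = 0"
    using x by (simp add: Bv inner_diff_right l_def dot_square_norm)
  ultimately have "B *v x = 0" by (rule psd_quadratic_form_eq_0_imp_mult_eq_0)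
  then have "A *v x = l *\<^sub>R x" by (simp add: Bv)
  then show ?thesis by (rule that[OF x _ min, folded l_def])
qed

lemma symmetric_matrix_finite_eigenvalues:
  fixes A :: "real^'n^'n"
  assumes sym: "transpose A = A"
  shows "finite {l. \<exists>v. v \<noteq> 0 \<and> A *v v = l *\<^sub>R v}"
proof -
  let ?E = "{l. \<exists>v. v \<noteq> 0 \<and> A *v v = l *\<^sub>R v}"
  define f where "f l = (SOME v. v \<noteq> 0 \<and> A *v v = l *\<^sub>R v)" for l
  have f: "f l \<noteq> 0 \<and> A *v f l = l *\<^sub>R f l" if "l \<in> ?E" for l
    using that someI_ex[where P="\<lambda>v. v \<noteq> 0 \<and> A *v v = l *\<^sub>R v"] unfolding f_def by blast
  have inj: "inj_on f ?E"
  proof (rule inj_onI)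
    fix a b assume a: "a \<in> ?E" and b: "b \<in> ?E" and e: "f a = f b"
    have "a *\<^sub>R f a = A *v f a" using f[OF a] by simp
    also have "\<dots> = b *\<^sub>R f a" using f[OF b] e by simp
    finally have "a *\<^sub>R f a = b *\<^sub>R f a" .
    then show "a = b" using f[OF a] by (simp add: scaleR_cancel_right)
  qed
  have orth: "pairwise orthogonal (f ` ?E)"
  proof (rule pairwiseI)
    fix x y assume "x \<in> f ` ?E" "y \<in> f ` ?E" "x \<noteq> y"
    then obtain a b where a: "a \<in> ?E" and b: "b \<in> ?E" and xy: "x = f a" "y = f b" "a \<noteq> b"
      by auto
    have "a * (x \<bullet> y) = b * (x \<bullet> y)"
      using symmetric_matrix_inner_commute[OF sym, of x y] f[OF a] f[OF b] xy by simp
    then show "orthogonal x y" using xy by (simp add: orthogonal_def)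
  qed
  show ?thesis
    using pairwise_orthogonal_imp_finite[OF orth] finite_image_iff[OF inj] by simp
qed

lemma min_eig_ge:
  fixes A :: "real^'n^'n"
  assumes sym: "transpose A = A" and form: "\<And>v. K * (v \<bullet> v) \<le> v \<bullet> (A *v v)"
  shows "K \<le> min_eig A"
proof -
  obtain x where "norm x = 1" "A *v x = (x \<bullet> (A *v x)) *\<^sub>R x"
    using symmetric_matrix_min_eigenvector[OF sym] by blast
  moreover from \<open>norm x = 1\<close> have "x \<noteq> 0" by auto
  ultimately have "{l. \<exists>v. v \<noteq> 0 \<and> A *v v = l *\<^sub>R v} \<noteq> {}" by blast
  moreover have "K \<le> l" if "\<exists>v. v \<noteq> 0 \<and> A *v v = l *\<^sub>R v" for l
  proof -
    from that obtain v where v: "v \<noteq> 0" "A *v v = l *\<^sub>R v" by blast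
    then show ?thesis using form[of v] by simp
  qed
  ultimately show ?thesis
    unfolding min_eig_def using symmetric_matrix_finite_eigenvalues[OF sym] by simp
qed

lemma min_eig_le_quadratic_form:
  fixes A :: "real^'n^'n"
  assumes sym: "transpose A = A"
  shows "min_eig A * (v \<bullet> v) \<le> v \<bullet> (A *v v)"
proof -
  obtain x where x: "norm x = 1" "A *v x = (x \<bullet> (A *v x)) *\<^sub>R x"
    and min: "\<And>v. (x \<bullet> (A *v x)) * (v \<bullet> v) \<le> v \<bullet> (A *v v)"
    using symmetric_matrix_min_eigenvector[OF sym] by blast
  from x(1) have "x \<noteq> 0" by auto
  with x(2) have "x \<bullet> (A *v x) \<in> {l. \<exists>v. v \<noteq> 0 \<and> A *v v = l *\<^sub>R v}" by blast
  then have "min_eig A \<le> x \<bullet> (A *v x)"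
    unfolding min_eig_def using symmetric_matrix_finite_eigenvalues[OF sym] by simp
  then have "min_eig A * (v \<bullet> v) \<le> (x \<bullet> (A *v x)) * (v \<bullet> v)" by (simp add: mult_right_mono)
  with min[of v] show ?thesis by linarith
qed

lemma pos_def_min_eig_pos:
  fixes A :: "real^'n^'n"
  assumes "pos_def A"
  shows "0 < min_eig A"
proof -
  from assms have sym: "transpose A = A" by (simp add: pos_def_def)
  obtain x where "norm x = 1" and min: "\<And>v. (x \<bullet> (A *v x)) * (v \<bullet> v) \<le> v \<bullet> (A *v v)"
    using symmetric_matrix_min_eigenvector[OF sym] by blast
  then have "x \<noteq> 0" by auto
  then have "0 < x \<bullet> (A *v x)" using assms by (simp add: pos_def_def)
  also have "\<dots> \<le> min_eig A" using min by (rule min_eig_ge[OF sym])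
  finally show ?thesis .
qed

lemma pos_def_neq_0: "pos_def A \<Longrightarrow> A \<noteq> (0::real^'n^'n)"
proof
  assume "pos_def A" "A = 0"
  moreover have "(1::real^'n) \<noteq> 0" by (simp add: vec_eq_iff)
  ultimately show False unfolding pos_def_def by auto
qed

lemma quadratic_form_outer: "v \<bullet> (outer x *v v) = (v \<bullet> x)\<^sup>2"
  by (simp add: outer_def matrix_vector_mult_def inner_vec_def power2_eq_square
      sum_distrib_left sum_distrib_right mult_ac sum_product)

lemma quadratic_form_sum:
  fixes A :: "'i \<Rightarrow> real^'n^'n"
  shows "v \<bullet> ((\<Sum>s\<in>T. A s) *v v) = (\<Sum>s\<in>T. v \<bullet> (A s *v v))"
  by (induction T rule: infinite_finite_induct) (simp_all add: matrix_vector_mult_add_rdistrib inner_add_right)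

lemma quadratic_form_sum_outer: "v \<bullet> ((\<Sum>s\<in>T. outer (x s)) *v v) = (\<Sum>s\<in>T. (v \<bullet> x s)\<^sup>2)"
  by (simp add: quadratic_form_sum quadratic_form_outer)

lemma transpose_sum_outer: "transpose (\<Sum>s\<in>T. outer (x s)) = (\<Sum>s\<in>T. outer (x s))"
  by (simp add: vec_eq_iff transpose_def outer_def mult.commute)

section \<open>Price and context blocks of the design matrix\<close>

definition vec_inl :: "real^('m::finite + 'k::finite) \<Rightarrow> real^'m" where
  "vec_inl v = (\<chi> j. v $ Inl j)"

definition vec_inr :: "real^('m::finite + 'k::finite) \<Rightarrow> real^'k" where
  "vec_inr v = (\<chi> j. v $ Inr j)"

lemma inner_stack: "v \<bullet> stack q c = vec_inl v \<bullet> q + vec_inr v \<bullet> c"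
proof -
  have "v \<bullet> stack q c = (\<Sum>i\<in>UNIV <+> UNIV. v $ i * stack q c $ i)"
    by (simp add: inner_vec_def)
  also have "\<dots> = (\<Sum>j\<in>UNIV. v $ Inl j * q $ j) + (\<Sum>j\<in>UNIV. v $ Inr j * c $ j)"
    by (simp add: sum.Plus stack_def del: UNIV_Plus_UNIV)
  finally show ?thesis by (simp add: inner_vec_def vec_inl_def vec_inr_def)
qed

lemma stack_vec_inl_vec_inr: "stack (vec_inl v) (vec_inr v) = v"
  by (simp add: vec_eq_iff stack_def vec_inl_def vec_inr_def split: sum.split)

lemma inner_self_eq_vec_inl_vec_inr: "v \<bullet> v = vec_inl v \<bullet> vec_inl v + vec_inr v \<bullet> vec_inr v"
  using inner_stack[of v "vec_inl v" "vec_inr v"] by (simp add: stack_vec_inl_vec_inr)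

lemma sum_mult_inner_mult_inner:
  fixes x :: "real^'i" and z :: "real^'j"
  shows "(\<Sum>s\<in>T. g s * ((x \<bullet> X s) * (z \<bullet> Z s)))
       = (\<Sum>i\<in>UNIV. \<Sum>j\<in>UNIV. x $ i * z $ j * (\<Sum>s\<in>T. g s * (X s $ i * Z s $ j)))"
proof -
  have "(\<Sum>s\<in>T. g s * ((x \<bullet> X s) * (z \<bullet> Z s)))
      = (\<Sum>s\<in>T. \<Sum>i\<in>UNIV. \<Sum>j\<in>UNIV. x $ i * z $ j * (g s * (X s $ i * Z s $ j)))"
    by (simp add: inner_vec_def sum_product sum_distrib_left mult_ac sum.swap[of _ "UNIV::'j set"])
  also have "\<dots> = (\<Sum>i\<in>UNIV. \<Sum>j\<in>UNIV. \<Sum>s\<in>T. x $ i * z $ j * (g s * (X s $ i * Z s $ j)))"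
    by (subst sum.swap) (simp add: sum.swap[of _ T])
  finally show ?thesis by (simp add: sum_distrib_left)
qed

lemma abs_double_sum_mult_le:
  fixes x :: "real^'i" and z :: "real^'j"
  assumes "\<And>i j. \<bar>E i j\<bar> \<le> e"
  shows "\<bar>\<Sum>i\<in>UNIV. \<Sum>j\<in>UNIV. x $ i * z $ j * E i j\<bar> \<le> e * (CARD('j) * (x \<bullet> x) + CARD('i) * (z \<bullet> z)) / 2"
proof -
  have "\<bar>\<Sum>i\<in>UNIV. \<Sum>j\<in>UNIV. x $ i * z $ j * E i j\<bar> \<le> (\<Sum>i\<in>UNIV. \<Sum>j\<in>UNIV. \<bar>x $ i * z $ j * E i j\<bar>)"
    by (rule order_trans[OF sum_abs sum_mono[OF sum_abs]])
  also have "\<dots> \<le> (\<Sum>i\<in>UNIV. \<Sum>j\<in>UNIV. e * ((x $ i)\<^sup>2 + (z $ j)\<^sup>2) / 2)"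
  proof (intro sum_mono)
    fix i j
    have "\<bar>x $ i * z $ j\<bar> \<le> ((x $ i)\<^sup>2 + (z $ j)\<^sup>2) / 2"
      using sum_squares_bound[of "\<bar>x $ i\<bar>" "\<bar>z $ j\<bar>"] by (simp add: abs_mult)
    then have "\<bar>x $ i * z $ j\<bar> * \<bar>E i j\<bar> \<le> ((x $ i)\<^sup>2 + (z $ j)\<^sup>2) / 2 * e"
      using assms[of i j] by (intro mult_mono) auto
    then show "\<bar>x $ i * z $ j * E i j\<bar> \<le> e * ((x $ i)\<^sup>2 + (z $ j)\<^sup>2) / 2"
      by (simp add: abs_mult mult_ac)
  qed
  also have "\<dots> = e / 2 * (\<Sum>i\<in>UNIV. \<Sum>j\<in>(UNIV::'j set). (x $ i)\<^sup>2 + (z $ j)\<^sup>2)"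
    by (simp add: sum_distrib_left)
  also have "(\<Sum>i\<in>UNIV. \<Sum>j\<in>(UNIV::'j set). (x $ i)\<^sup>2 + (z $ j)\<^sup>2) = CARD('j) * (x \<bullet> x) + CARD('i) * (z \<bullet> z)"
    by (simp add: sum.distrib inner_vec_def power2_eq_square sum_distrib_left[symmetric]
        sum.swap[of "\<lambda>i j. z $ j * z $ j"])
  finally show ?thesis by simp
qed

lemma abs_sum_mult_inner_mult_inner_le:
  fixes x :: "real^'i" and z :: "real^'j"
  assumes "\<And>i j. \<bar>\<Sum>s\<in>T. g s * (X s $ i * Z s $ j)\<bar> \<le> e"
  shows "\<bar>\<Sum>s\<in>T. g s * ((x \<bullet> X s) * (z \<bullet> Z s))\<bar> \<le> e * (CARD('j) * (x \<bullet> x) + CARD('i) * (z \<bullet> z)) / 2"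
  unfolding sum_mult_inner_mult_inner using assms by (rule abs_double_sum_mult_le)

lemma sum_mult_inner_square_ge:
  fixes X :: "'s \<Rightarrow> real^'n" and A :: "real^'n^'n"
  assumes form: "\<And>w. l * (w \<bullet> w) \<le> w \<bullet> (A *v w)" and N: "0 \<le> N"
    and close: "\<And>i j. \<bar>(\<Sum>s\<in>T. g s * (X s $ i * X s $ j)) - N * A $ i $ j\<bar> \<le> e * N"
    and e: "e * CARD('n) \<le> l / 2"
  shows "l / 2 * N * (w \<bullet> w) \<le> (\<Sum>s\<in>T. g s * (w \<bullet> X s)\<^sup>2)"
proof -
  define E where "E i j = (\<Sum>s\<in>T. g s * (X s $ i * X s $ j)) - N * A $ i $ j" for i j
  have "(\<Sum>s\<in>T. g s * (w \<bullet> X s)\<^sup>2) = (\<Sum>i\<in>UNIV. \<Sum>j\<in>UNIV. w $ i * w $ j * (N * A $ i $ j + E i j))"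
    using sum_mult_inner_mult_inner[of g w X w X T] by (simp add: power2_eq_square E_def)
  also have "\<dots> = N * (\<Sum>i\<in>UNIV. \<Sum>j\<in>UNIV. w $ i * w $ j * A $ i $ j) + (\<Sum>i\<in>UNIV. \<Sum>j\<in>UNIV. w $ i * w $ j * E i j)"
    by (simp add: distrib_left sum.distrib sum_distrib_left mult_ac)
  also have "(\<Sum>i\<in>UNIV. \<Sum>j\<in>UNIV. w $ i * w $ j * A $ i $ j) = w \<bullet> (A *v w)"
    by (simp add: inner_vec_def matrix_vector_mult_def sum_distrib_left mult_ac)
  finally have eq: "(\<Sum>s\<in>T. g s * (w \<bullet> X s)\<^sup>2) = N * (w \<bullet> (A *v w)) + (\<Sum>i\<in>UNIV. \<Sum>j\<in>UNIV. w $ i * w $ j * E i j)" .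
  have "\<bar>\<Sum>i\<in>UNIV. \<Sum>j\<in>UNIV. w $ i * w $ j * E i j\<bar> \<le> e * N * (CARD('n) * (w \<bullet> w) + CARD('n) * (w \<bullet> w)) / 2"
    by (rule abs_double_sum_mult_le) (use close in \<open>simp add: E_def\<close>)
  also have "\<dots> = (e * CARD('n)) * (N * (w \<bullet> w))" by (simp add: algebra_simps)
  also have "\<dots> \<le> l / 2 * (N * (w \<bullet> w))" using e N by (intro mult_right_mono) auto
  finally have "- (l / 2 * (N * (w \<bullet> w))) \<le> (\<Sum>i\<in>UNIV. \<Sum>j\<in>UNIV. w $ i * w $ j * E i j)" by linarith
  moreover have "N * (l * (w \<bullet> w)) \<le> N * (w \<bullet> (A *v w))" using form N by (rule mult_left_mono)
  ultimately show ?thesis unfolding eq by (simp add: algebra_simps)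
qed

lemma two_regime_lower_bound:
  fixes a c \<delta> N W P C Q :: real
  assumes "0 < a" "0 < c" "0 < \<delta>" "0 \<le> W" "W \<le> N" "0 \<le> P" "0 \<le> C"
    and QA: "a * N * C - a * \<delta> / 2 * N * P \<le> Q"
    and QB: "c * W * P - c / (2 * (1 + \<delta>)) * W * (P + C) \<le> Q"
  shows "min (a * \<delta> / (2 * (1 + \<delta>))) (c / (2 * (1 + \<delta>))) * W * (P + C) \<le> Q"
proof (cases "\<delta> * P \<le> C")
  case True
  have "\<delta> * (P + C) \<le> (1 + \<delta>) * C" using True by (simp add: algebra_simps)
  then have "\<delta> / (1 + \<delta>) * (P + C) \<le> C" using \<open>0 < \<delta>\<close> by (simp add: field_simps)
  then have "a / 2 * W * (\<delta> / (1 + \<delta>) * (P + C)) \<le> a / 2 * W * C"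
    using assms by (intro mult_left_mono) auto
  also have "\<dots> \<le> a / 2 * N * C" using assms by (intro mult_right_mono) auto
  also have "\<dots> \<le> Q"
  proof -
    have "a * \<delta> / 2 * N * P \<le> a / 2 * N * C"
      using True assms mult_left_mono[OF True, of "a / 2 * N"] by (simp add: algebra_simps)
    then show ?thesis using QA by linarith
  qed
  finally have "a * \<delta> / (2 * (1 + \<delta>)) * W * (P + C) \<le> Q" by (simp add: algebra_simps)
  moreover have "min (a * \<delta> / (2 * (1 + \<delta>))) (c / (2 * (1 + \<delta>))) * W * (P + C) \<le> a * \<delta> / (2 * (1 + \<delta>)) * W * (P + C)"
    using assms by (intro mult_right_mono) auto
  ultimately show ?thesis by linarith
next
  case False
  then have "(P + C) / (1 + \<delta>) \<le> P" using \<open>0 < \<delta>\<close> by (simp add: field_simps)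
  then have "c * W * ((P + C) / (1 + \<delta>)) \<le> c * W * P" using assms by (intro mult_left_mono) auto
  moreover have "c * W * ((P + C) / (1 + \<delta>)) = 2 * (c / (2 * (1 + \<delta>)) * W * (P + C))"
    using \<open>0 < \<delta>\<close> by (simp add: field_simps)
  ultimately have "c / (2 * (1 + \<delta>)) * W * (P + C) \<le> Q" using QB by linarith
  moreover have "min (a * \<delta> / (2 * (1 + \<delta>))) (c / (2 * (1 + \<delta>))) * W * (P + C) \<le> c / (2 * (1 + \<delta>)) * W * (P + C)"
    using assms by (intro mult_right_mono) auto
  ultimately show ?thesis by linarith
qed

lemma sum_inner_stack_square_ge_context_minus_price:
  fixes q :: "'s \<Rightarrow> real^'m" and c :: "'s \<Rightarrow> real^'k" and B :: real
  assumes "\<And>s. s \<in> T \<Longrightarrow> norm (q s) \<le> B"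
  shows "(\<Sum>s\<in>T. (vec_inr v \<bullet> c s)\<^sup>2) / 2 - card T * B\<^sup>2 * (vec_inl v \<bullet> vec_inl v)
           \<le> (\<Sum>s\<in>T. (v \<bullet> stack (q s) (c s))\<^sup>2)"
proof -
  have "(vec_inr v \<bullet> c s)\<^sup>2 / 2 - B\<^sup>2 * (vec_inl v \<bullet> vec_inl v) \<le> (v \<bullet> stack (q s) (c s))\<^sup>2"
    if s: "s \<in> T" for s
  proof -
    have "\<bar>vec_inl v \<bullet> q s\<bar> \<le> norm (vec_inl v) * B"
      using Cauchy_Schwarz_ineq2[of "vec_inl v" "q s"] assms[OF s]
      by (meson mult_left_mono norm_ge_zero order_trans)
    then have "\<bar>vec_inl v \<bullet> q s\<bar>\<^sup>2 \<le> (norm (vec_inl v) * B)\<^sup>2"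
      by (rule power_mono) simp
    then have "(vec_inl v \<bullet> q s)\<^sup>2 \<le> B\<^sup>2 * (vec_inl v \<bullet> vec_inl v)"
      by (simp add: power_mult_distrib dot_square_norm mult.commute)
    moreover have "(vec_inr v \<bullet> c s)\<^sup>2 / 2 - (vec_inl v \<bullet> q s)\<^sup>2 \<le> (vec_inl v \<bullet> q s + vec_inr v \<bullet> c s)\<^sup>2"
      using zero_le_power2[of "2 * (vec_inl v \<bullet> q s) + vec_inr v \<bullet> c s"]
      by (simp add: power2_eq_square algebra_simps)
    ultimately show ?thesis by (simp add: inner_stack)
  qed
  then have "(\<Sum>s\<in>T. (vec_inr v \<bullet> c s)\<^sup>2 / 2 - B\<^sup>2 * (vec_inl v \<bullet> vec_inl v)) \<le> (\<Sum>s\<in>T. (v \<bullet> stack (q s) (c s))\<^sup>2)"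
    by (rule sum_mono)
  then show ?thesis by (simp add: sum_subtractf sum_divide_distrib)
qed

lemma sum_inner_stack_square_ge_perturbation:
  "2 * (\<Sum>s\<in>T. a s * ((v \<bullet> stack (p s) (c s)) * (vec_inl v \<bullet> u s)))
     + (\<Sum>s\<in>T. (a s)\<^sup>2 * (vec_inl v \<bullet> u s)\<^sup>2)
   \<le> (\<Sum>s\<in>T. (v \<bullet> stack (p s + a s *\<^sub>R u s) (c s))\<^sup>2)"
proof -
  have "2 * (a s * ((v \<bullet> stack (p s) (c s)) * (vec_inl v \<bullet> u s))) + (a s)\<^sup>2 * (vec_inl v \<bullet> u s)\<^sup>2
      \<le> (v \<bullet> stack (p s + a s *\<^sub>R u s) (c s))\<^sup>2" for s
    using zero_le_power2[of "v \<bullet> stack (p s) (c s)"]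
    by (simp add: inner_stack inner_add_right power2_eq_square algebra_simps)
  then have "(\<Sum>s\<in>T. 2 * (a s * ((v \<bullet> stack (p s) (c s)) * (vec_inl v \<bullet> u s))) + (a s)\<^sup>2 * (vec_inl v \<bullet> u s)\<^sup>2)
      \<le> (\<Sum>s\<in>T. (v \<bullet> stack (p s + a s *\<^sub>R u s) (c s))\<^sup>2)"
    by (rule sum_mono)
  then show ?thesis by (simp add: sum.distrib sum_distrib_left)
qed

lemma sum_inner_stack_square_ge_context_moment:
  fixes q :: "'s \<Rightarrow> real^'m" and c :: "'s \<Rightarrow> real^'k" and Sc :: "real^'k^'k" and B \<delta> lc ec :: real
  assumes q: "\<And>s. s \<in> T \<Longrightarrow> norm (q s) \<le> B" and \<delta>: "8 * B\<^sup>2 \<le> \<delta> * lc"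
    and lc: "\<And>w. lc * (w \<bullet> w) \<le> w \<bullet> (Sc *v w)"
    and ctx: "\<And>i j. \<bar>(\<Sum>s\<in>T. c s $ i * c s $ j) - card T * Sc $ i $ j\<bar> \<le> ec * card T"
      "ec * CARD('k) \<le> lc / 2"
  shows "lc / 4 * card T * (vec_inr v \<bullet> vec_inr v) - lc / 4 * \<delta> / 2 * card T * (vec_inl v \<bullet> vec_inl v)
           \<le> (\<Sum>s\<in>T. (v \<bullet> stack (q s) (c s))\<^sup>2)"
proof -
  have "lc / 2 * card T * (vec_inr v \<bullet> vec_inr v) \<le> (\<Sum>s\<in>T. 1 * (vec_inr v \<bullet> c s)\<^sup>2)"
    by (rule sum_mult_inner_square_ge[OF lc _ _ ctx(2)]) (use ctx(1) in simp_all)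
  moreover have "card T * B\<^sup>2 * (vec_inl v \<bullet> vec_inl v) \<le> lc / 4 * \<delta> / 2 * card T * (vec_inl v \<bullet> vec_inl v)"
  proof -
    have "card T * (vec_inl v \<bullet> vec_inl v) * (8 * B\<^sup>2) \<le> card T * (vec_inl v \<bullet> vec_inl v) * (\<delta> * lc)"
      using \<delta> by (intro mult_left_mono) auto
    then show ?thesis by (simp add: algebra_simps)
  qed
  ultimately show ?thesis
    using sum_inner_stack_square_ge_context_minus_price[where T=T and q=q and B=B and v=v and c=c, OF q] by simp
qed

lemma sum_inner_stack_square_ge_perturbation_moment:
  fixes c :: "'s \<Rightarrow> real^'k" and p u :: "'s \<Rightarrow> real^'m" and a :: "'s \<Rightarrow> real"
    and Su :: "real^'m^'m" and v :: "real^('m + 'k)" and \<delta> lu W eu ex :: real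
  assumes \<delta>: "0 < \<delta>" and lu: "\<And>w. lu * (w \<bullet> w) \<le> w \<bullet> (Su *v w)"
    and W: "W = (\<Sum>s\<in>T. (a s)\<^sup>2)"
    and pert: "\<And>i j. \<bar>(\<Sum>s\<in>T. (a s)\<^sup>2 * (u s $ i * u s $ j)) - W * Su $ i $ j\<bar> \<le> eu * W"
      "eu * CARD('m) \<le> lu / 2"
    and cross: "\<And>i j. \<bar>\<Sum>s\<in>T. a s * (stack (p s) (c s) $ i * u s $ j)\<bar> \<le> ex * W"
      "ex * (CARD('m) + CARD('m + 'k)) \<le> lu / (4 * (1 + \<delta>))" "0 \<le> ex"
  shows "lu / 2 * W * (vec_inl v \<bullet> vec_inl v) - lu / 2 / (2 * (1 + \<delta>)) * W * (v \<bullet> v)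
           \<le> (\<Sum>s\<in>T. (v \<bullet> stack (p s + a s *\<^sub>R u s) (c s))\<^sup>2)"
proof -
  define P where "P = vec_inl v \<bullet> vec_inl v"
  have P: "0 \<le> P" "P \<le> v \<bullet> v" unfolding P_def using inner_self_eq_vec_inl_vec_inr[of v] by simp_all
  have W0: "0 \<le> W" unfolding W by (simp add: sum_nonneg)
  have "lu / 2 * W * P \<le> (\<Sum>s\<in>T. (a s)\<^sup>2 * (vec_inl v \<bullet> u s)\<^sup>2)"
    unfolding P_def by (rule sum_mult_inner_square_ge[OF lu W0 pert])
  moreover have "\<bar>\<Sum>s\<in>T. a s * ((v \<bullet> stack (p s) (c s)) * (vec_inl v \<bullet> u s))\<bar>
      \<le> ex * W * (CARD('m) * (v \<bullet> v) + CARD('m + 'k) * P) / 2"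
    unfolding P_def by (rule abs_sum_mult_inner_mult_inner_le) (rule cross(1))
  moreover have "ex * W * (CARD('m) * (v \<bullet> v) + CARD('m + 'k) * P) \<le> ex * (CARD('m) + CARD('m + 'k)) * (W * (v \<bullet> v))"
  proof -
    have "CARD('m) * (v \<bullet> v) + CARD('m + 'k) * P \<le> (CARD('m) + CARD('m + 'k)) * (v \<bullet> v)"
      using mult_left_mono[OF P(2) of_nat_0_le_iff, of "CARD('m + 'k)"] unfolding of_nat_add distrib_right
      by linarith
    then have "ex * W * (CARD('m) * (v \<bullet> v) + CARD('m + 'k) * P) \<le> ex * W * ((CARD('m) + CARD('m + 'k)) * (v \<bullet> v))"
      using cross(3) W0 by (intro mult_left_mono) auto
    then show ?thesis by (simp only: mult_ac)
  qed
  moreover have "ex * (CARD('m) + CARD('m + 'k)) * (W * (v \<bullet> v)) \<le> lu / (4 * (1 + \<delta>)) * (W * (v \<bullet> v))"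
    using cross(2) W0 by (intro mult_right_mono) auto
  moreover have "lu / 2 / (2 * (1 + \<delta>)) = lu / (4 * (1 + \<delta>))" by simp
  ultimately show ?thesis
    using sum_inner_stack_square_ge_perturbation[of a v p c u T] unfolding P_def by (simp add: abs_le_iff)
qed

lemma quadratic_form_sum_outer_stack_ge:
  fixes c :: "'s \<Rightarrow> real^'k" and p u :: "'s \<Rightarrow> real^'m" and a :: "'s \<Rightarrow> real"
    and Sc :: "real^'k^'k" and Su :: "real^'m^'m" and v :: "real^('m + 'k)"
    and B \<delta> lc lu W ec eu ex :: real
  assumes a: "\<And>s. s \<in> T \<Longrightarrow> 0 \<le> a s \<and> a s \<le> 1"
    and q: "\<And>s. s \<in> T \<Longrightarrow> norm (p s + a s *\<^sub>R u s) \<le> B"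
    and \<delta>: "0 < \<delta>" "8 * B\<^sup>2 \<le> \<delta> * lc"
    and lc: "0 < lc" "\<And>w. lc * (w \<bullet> w) \<le> w \<bullet> (Sc *v w)"
    and lu: "0 < lu" "\<And>w. lu * (w \<bullet> w) \<le> w \<bullet> (Su *v w)"
    and W: "W = (\<Sum>s\<in>T. (a s)\<^sup>2)"
    and ctx: "\<And>i j. \<bar>(\<Sum>s\<in>T. c s $ i * c s $ j) - card T * Sc $ i $ j\<bar> \<le> ec * card T"
      "ec * CARD('k) \<le> lc / 2"
    and pert: "\<And>i j. \<bar>(\<Sum>s\<in>T. (a s)\<^sup>2 * (u s $ i * u s $ j)) - W * Su $ i $ j\<bar> \<le> eu * W"
      "eu * CARD('m) \<le> lu / 2"
    and cross: "\<And>i j. \<bar>\<Sum>s\<in>T. a s * (stack (p s) (c s) $ i * u s $ j)\<bar> \<le> ex * W"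
      "ex * (CARD('m) + CARD('m + 'k)) \<le> lu / (4 * (1 + \<delta>))" "0 \<le> ex"
  shows "min (lc * \<delta> / (8 * (1 + \<delta>))) (lu / (4 * (1 + \<delta>))) * W * (v \<bullet> v)
           \<le> v \<bullet> ((\<Sum>s\<in>T. outer (stack (p s + a s *\<^sub>R u s) (c s))) *v v)"
proof -
  have "W \<le> (\<Sum>s\<in>T. 1)" unfolding W by (rule sum_mono) (use a in \<open>auto simp: power_le_one\<close>)
  then have WN: "W \<le> card T" by simp
  have "min (lc / 4 * \<delta> / (2 * (1 + \<delta>))) (lu / 2 / (2 * (1 + \<delta>))) * W * (vec_inl v \<bullet> vec_inl v + vec_inr v \<bullet> vec_inr v)
      \<le> (\<Sum>s\<in>T. (v \<bullet> stack (p s + a s *\<^sub>R u s) (c s))\<^sup>2)"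
  proof (rule two_regime_lower_bound[OF _ _ \<delta>(1) _ WN])
    show "lc / 4 * card T * (vec_inr v \<bullet> vec_inr v) - lc / 4 * \<delta> / 2 * card T * (vec_inl v \<bullet> vec_inl v)
        \<le> (\<Sum>s\<in>T. (v \<bullet> stack (p s + a s *\<^sub>R u s) (c s))\<^sup>2)"
      by (rule sum_inner_stack_square_ge_context_moment[OF q \<delta>(2) lc(2) ctx])
    show "lu / 2 * W * (vec_inl v \<bullet> vec_inl v) - lu / 2 / (2 * (1 + \<delta>)) * W * (vec_inl v \<bullet> vec_inl v + vec_inr v \<bullet> vec_inr v)
        \<le> (\<Sum>s\<in>T. (v \<bullet> stack (p s + a s *\<^sub>R u s) (c s))\<^sup>2)"
      using sum_inner_stack_square_ge_perturbation_moment[OF \<delta>(1) lu(2) W pert cross]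
      by (simp add: inner_self_eq_vec_inl_vec_inr[symmetric])
  qed (use lc lu W in \<open>simp_all add: sum_nonneg\<close>)
  then show ?thesis
    by (simp add: quadratic_form_sum_outer inner_self_eq_vec_inl_vec_inr[symmetric])
qed

section \<open>A dyadic strong law for bounded martingale differences\<close>

lemma (in finite_measure) integrable_abs_le_const:
  fixes f :: "'a \<Rightarrow> real"
  assumes "f \<in> borel_measurable M" and "\<And>x. x \<in> space M \<Longrightarrow> \<bar>f x\<bar> \<le> B"
  shows "integrable M f"
  using assms by (intro integrable_const_bound[where B=B]) auto

lemma AE_eventually_all_finite2:
  fixes P :: "'i::finite \<Rightarrow> 'j::finite \<Rightarrow> 'a \<Rightarrow> 'b \<Rightarrow> bool"
  assumes "\<And>i j. AE \<omega> in M. eventually (P i j \<omega>) F"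
  shows "AE \<omega> in M. eventually (\<lambda>k. \<forall>i j. P i j \<omega> k) F"
proof -
  have "AE \<omega> in M. \<forall>ij\<in>UNIV. eventually (P (fst ij) (snd ij) \<omega>) F"
    by (rule AE_finite_allI) (use assms in auto)
  then show ?thesis
    by (rule eventually_mono) (auto intro!: eventually_all_finite)
qed

lemma borel_measurable_vec_nth [measurable (raw)]:
  fixes f :: "'a \<Rightarrow> real^'n"
  shows "f \<in> borel_measurable M \<Longrightarrow> (\<lambda>x. f x $ i) \<in> borel_measurable M"
  by (rule borel_measurable_continuous_on[OF linear_continuous_on[OF bounded_linear_vec_nth]])

lemma integral_vec_nth:
  fixes f :: "'a \<Rightarrow> 'b::euclidean_space^'n"
  assumes "integrable M f"
  shows "integral\<^sup>L M f $ i = integral\<^sup>L M (\<lambda>x. f x $ i)"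
  using integral_bounded_linear[OF bounded_linear_vec_nth assms] by simp

lemma integral_mat_nth:
  fixes f :: "'a \<Rightarrow> real^'n^'m"
  assumes "integrable M f"
  shows "integral\<^sup>L M f $ i $ j = integral\<^sup>L M (\<lambda>x. f x $ i $ j)"
  using integral_vec_nth[OF assms] integral_vec_nth[OF integrable_bounded_linear[OF bounded_linear_vec_nth assms]]
  by simp

lemma power2_add_le:
  fixes S d c :: real
  assumes "\<bar>d\<bar> \<le> c"
  shows "(S + d)\<^sup>2 \<le> S\<^sup>2 + 2 * (S * d) + c\<^sup>2"
proof -
  have "d\<^sup>2 \<le> c\<^sup>2" using assms by (metis abs_ge_zero power2_abs power_mono)
  then show ?thesis by (simp add: power2_eq_square algebra_simps)
qed

lemma power4_add_le:
  fixes S d c :: real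
  assumes "\<bar>d\<bar> \<le> c"
  shows "(S + d) ^ 4 \<le> S ^ 4 + 4 * (S ^ 3 * d) + 8 * c\<^sup>2 * S\<^sup>2 + 3 * c ^ 4"
proof -
  have d2: "d\<^sup>2 \<le> c\<^sup>2" using assms by (metis abs_ge_zero power2_abs power_mono)
  have "S * d ^ 3 = (S * d) * d\<^sup>2" by (simp add: power2_eq_square power3_eq_cube)
  also have "\<dots> \<le> (S\<^sup>2 + d\<^sup>2) / 2 * d\<^sup>2"
    using sum_squares_bound[of S d] by (intro mult_right_mono) (auto simp: power2_eq_square)
  also have "\<dots> \<le> (S\<^sup>2 + c\<^sup>2) / 2 * c\<^sup>2" using d2 by (intro mult_mono) auto
  finally have d3: "S * d ^ 3 \<le> (S\<^sup>2 * c\<^sup>2 + c ^ 4) / 2" by (simp add: algebra_simps power4_eq_xxxx power2_eq_square)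
  have "d ^ 4 \<le> c ^ 4" using power_mono[OF d2, of 2] by (simp add: power4_eq_xxxx power2_eq_square)
  moreover have "S\<^sup>2 * d\<^sup>2 \<le> S\<^sup>2 * c\<^sup>2" using d2 by (simp add: mult_left_mono)
  moreover have "(S + d) ^ 4 = S ^ 4 + 4 * (S ^ 3 * d) + 6 * (S\<^sup>2 * d\<^sup>2) + 4 * (S * d ^ 3) + d ^ 4"
    by (simp add: power2_eq_square power3_eq_cube power4_eq_xxxx algebra_simps)
  ultimately show ?thesis using d3 by (simp add: algebra_simps power4_eq_xxxx power2_eq_square)
qed

lemma (in prob_space) moments_add_orthogonal_le:
  fixes S d :: "'a \<Rightarrow> real"
  assumes meas: "S \<in> borel_measurable M" "d \<in> borel_measurable M"
    and bnd: "\<And>\<omega>. \<omega> \<in> space M \<Longrightarrow> \<bar>S \<omega>\<bar> \<le> C" "\<And>\<omega>. \<omega> \<in> space M \<Longrightarrow> \<bar>d \<omega>\<bar> \<le> c"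
    and orth: "expectation (\<lambda>\<omega>. S \<omega> * d \<omega>) = 0" "expectation (\<lambda>\<omega>. S \<omega> ^ 3 * d \<omega>) = 0"
  shows "expectation (\<lambda>\<omega>. (S \<omega> + d \<omega>)\<^sup>2) \<le> expectation (\<lambda>\<omega>. (S \<omega>)\<^sup>2) + c\<^sup>2"
    and "expectation (\<lambda>\<omega>. (S \<omega> + d \<omega>) ^ 4)
           \<le> expectation (\<lambda>\<omega>. S \<omega> ^ 4) + 8 * c\<^sup>2 * expectation (\<lambda>\<omega>. (S \<omega>)\<^sup>2) + 3 * c ^ 4"
proof -
  have int: "integrable M (\<lambda>\<omega>. S \<omega> ^ k * d \<omega> ^ l)" for k l
  proof (rule integrable_abs_le_const)
    fix \<omega> assume \<omega>: "\<omega> \<in> space M"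
    have "\<bar>S \<omega>\<bar> ^ k \<le> C ^ k" "\<bar>d \<omega>\<bar> ^ l \<le> c ^ l"
      using bnd[OF \<omega>] by (auto intro!: power_mono)
    moreover have "0 \<le> C ^ k" using bnd(1)[OF \<omega>] by simp
    ultimately show "\<bar>S \<omega> ^ k * d \<omega> ^ l\<bar> \<le> C ^ k * c ^ l"
      by (simp add: abs_mult power_abs mult_mono)
  qed (use meas in measurable)
  have int_sum: "integrable M (\<lambda>\<omega>. (S \<omega> + d \<omega>) ^ k)" for k
  proof (rule integrable_abs_le_const)
    fix \<omega> assume "\<omega> \<in> space M"
    then show "\<bar>(S \<omega> + d \<omega>) ^ k\<bar> \<le> (C + c) ^ k"
      using bnd by (auto simp: power_abs intro!: power_mono abs_triangle_ineq[THEN order_trans] add_mono)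
  qed (use meas in measurable)
  have int1: "integrable M (\<lambda>\<omega>. S \<omega> ^ k)" for k using int[of k 0] by simp
  have int2: "integrable M (\<lambda>\<omega>. S \<omega> * d \<omega>)" using int[of 1 1] by simp
  have int3: "integrable M (\<lambda>\<omega>. S \<omega> ^ 3 * d \<omega>)" using int[of 3 1] by simp
  have "expectation (\<lambda>\<omega>. (S \<omega> + d \<omega>)\<^sup>2) \<le> expectation (\<lambda>\<omega>. (S \<omega>)\<^sup>2 + 2 * (S \<omega> * d \<omega>) + c\<^sup>2)"
    using bnd by (intro integral_mono int_sum power2_add_le) (auto intro!: Bochner_Integration.integrable_add integrable_mult_right int1 int2)
  also have "\<dots> = expectation (\<lambda>\<omega>. (S \<omega>)\<^sup>2) + c\<^sup>2"
    using orth int1 int2 by (simp add: prob_space)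
  finally show "expectation (\<lambda>\<omega>. (S \<omega> + d \<omega>)\<^sup>2) \<le> expectation (\<lambda>\<omega>. (S \<omega>)\<^sup>2) + c\<^sup>2" .
  have "expectation (\<lambda>\<omega>. (S \<omega> + d \<omega>) ^ 4)
      \<le> expectation (\<lambda>\<omega>. S \<omega> ^ 4 + 4 * (S \<omega> ^ 3 * d \<omega>) + 8 * c\<^sup>2 * (S \<omega>)\<^sup>2 + 3 * c ^ 4)"
    using bnd by (intro integral_mono int_sum power4_add_le) (auto intro!: Bochner_Integration.integrable_add integrable_mult_right int1 int3)
  also have "\<dots> = expectation (\<lambda>\<omega>. S \<omega> ^ 4) + 8 * c\<^sup>2 * expectation (\<lambda>\<omega>. (S \<omega>)\<^sup>2) + 3 * c ^ 4"
    using orth int1 int3 by (simp add: prob_space)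
  finally show "expectation (\<lambda>\<omega>. (S \<omega> + d \<omega>) ^ 4)
      \<le> expectation (\<lambda>\<omega>. S \<omega> ^ 4) + 8 * c\<^sup>2 * expectation (\<lambda>\<omega>. (S \<omega>)\<^sup>2) + 3 * c ^ 4" .
qed

lemma (in prob_space) martingale_difference_moments_le:
  fixes F :: "nat \<Rightarrow> 'a measure" and D :: "nat \<Rightarrow> 'a \<Rightarrow> real" and b :: "nat \<Rightarrow> real"
  assumes sub: "\<And>s. subalgebra M (F s)"
    and mono: "\<And>r s. r \<le> s \<Longrightarrow> sets (F r) \<subseteq> sets (F s)"
    and adapted: "\<And>s. 1 \<le> s \<Longrightarrow> D s \<in> borel_measurable (F s)"
    and bnd: "\<And>s \<omega>. 1 \<le> s \<Longrightarrow> \<omega> \<in> space M \<Longrightarrow> \<bar>D s \<omega>\<bar> \<le> b s"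
    and orth: "\<And>s g. 1 \<le> s \<Longrightarrow> g \<in> borel_measurable (F (s - 1)) \<Longrightarrow> (\<exists>B. \<forall>\<omega>\<in>space M. \<bar>g \<omega>\<bar> \<le> B) \<Longrightarrow>
                  expectation (\<lambda>\<omega>. g \<omega> * D s \<omega>) = 0"
  shows "expectation (\<lambda>\<omega>. (\<Sum>s\<in>{1..t}. D s \<omega>)\<^sup>2) \<le> (\<Sum>s\<in>{1..t}. (b s)\<^sup>2)
       \<and> expectation (\<lambda>\<omega>. (\<Sum>s\<in>{1..t}. D s \<omega>) ^ 4) \<le> 11 * (\<Sum>s\<in>{1..t}. (b s)\<^sup>2)\<^sup>2"
proof (induction t)
  case (Suc t)
  define S where "S \<omega> = (\<Sum>s\<in>{1..t}. D s \<omega>)" for \<omega>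
  define V where "V = (\<Sum>s\<in>{1..t}. (b s)\<^sup>2)"
  have S_F: "S \<in> borel_measurable (F t)"
  proof -
    have "D s \<in> borel_measurable (F t)" if "s \<in> {1..t}" for s
      using adapted[of s] mono[of s t] sub that
      by (auto simp: subalgebra_def measurable_def)
    then show ?thesis unfolding S_def by (rule borel_measurable_sum)
  qed
  have D_M: "D (Suc t) \<in> borel_measurable M"
    using adapted[of "Suc t"] by (auto intro: measurable_from_subalg[OF sub])
  have S_bnd: "\<bar>S \<omega>\<bar> \<le> (\<Sum>s\<in>{1..t}. b s)" if "\<omega> \<in> space M" for \<omega>
    unfolding S_def by (rule order_trans[OF sum_abs sum_mono]) (use bnd that in auto)
  have S3_bnd: "\<bar>S \<omega> ^ 3\<bar> \<le> (\<Sum>s\<in>{1..t}. b s) ^ 3" if "\<omega> \<in> space M" for \<omega>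
    unfolding power_abs by (rule power_mono[OF S_bnd[OF that]]) simp
  have orth1: "expectation (\<lambda>\<omega>. S \<omega> * D (Suc t) \<omega>) = 0"
    by (rule orth) (use S_F S_bnd in auto)
  have orth3: "expectation (\<lambda>\<omega>. S \<omega> ^ 3 * D (Suc t) \<omega>) = 0"
    by (rule orth) (use S_F S3_bnd in auto)
  note step = moments_add_orthogonal_le[OF measurable_from_subalg[OF sub S_F] D_M S_bnd bnd orth1 orth3]
  have IH: "expectation (\<lambda>\<omega>. (S \<omega>)\<^sup>2) \<le> V" "expectation (\<lambda>\<omega>. S \<omega> ^ 4) \<le> 11 * V\<^sup>2"
    using Suc.IH unfolding S_def V_def by auto
  have V0: "0 \<le> V" unfolding V_def by (simp add: sum_nonneg)
  have "expectation (\<lambda>\<omega>. (S \<omega> + D (Suc t) \<omega>) ^ 4) \<le> 11 * V\<^sup>2 + 8 * (b (Suc t))\<^sup>2 * V + 3 * b (Suc t) ^ 4"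
  proof -
    have "8 * (b (Suc t))\<^sup>2 * expectation (\<lambda>\<omega>. (S \<omega>)\<^sup>2) \<le> 8 * (b (Suc t))\<^sup>2 * V"
      using IH(1) by (intro mult_left_mono) auto
    then show ?thesis using step(2) IH(2) by linarith
  qed
  also have "\<dots> \<le> 11 * (V + (b (Suc t))\<^sup>2)\<^sup>2"
  proof -
    have "0 \<le> V * (b (Suc t))\<^sup>2" "0 \<le> b (Suc t) ^ 4" using V0 by simp_all
    then show ?thesis by (simp add: power2_eq_square power4_eq_xxxx algebra_simps)
  qed
  finally show ?case
    using step(1) IH by (simp add: S_def V_def sum.cl_ivl_Suc)
qed simp

lemma (in prob_space) AE_eventually_abs_less_of_fourth_moment:
  fixes S :: "nat \<Rightarrow> 'a \<Rightarrow> real" and w :: "nat \<Rightarrow> real"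
  assumes meas: "\<And>k. S k \<in> borel_measurable M"
    and int: "\<And>k. integrable M (\<lambda>\<omega>. S k \<omega> ^ 4)"
    and mom: "\<And>k. expectation (\<lambda>\<omega>. S k \<omega> ^ 4) \<le> C * (w k)\<^sup>2"
    and w: "\<And>k. 0 < w k" and summ: "summable (\<lambda>k. 1 / (w k)\<^sup>2)"
    and \<epsilon>: "0 < \<epsilon>"
  shows "AE \<omega> in M. eventually (\<lambda>k. \<bar>S k \<omega>\<bar> < \<epsilon> * w k) sequentially"
proof -
  define A where "A k = {\<omega>\<in>space M. (\<epsilon> * w k) ^ 4 \<le> S k \<omega> ^ 4}" for k
  have A: "A k \<in> sets M" for k unfolding A_def using meas by measurable
  have "measure M (A k) \<le> C / \<epsilon> ^ 4 * (1 / (w k)\<^sup>2)" for k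
  proof -
    have pos: "0 < (\<epsilon> * w k) ^ 4" using \<epsilon> w[of k] by simp
    have "measure M (A k) \<le> expectation (\<lambda>\<omega>. S k \<omega> ^ 4) / (\<epsilon> * w k) ^ 4"
      unfolding A_def by (rule integral_Markov_inequality_measure[OF int]) (use pos in auto)
    also have "\<dots> \<le> C * (w k)\<^sup>2 / (\<epsilon> * w k) ^ 4"
      by (rule divide_right_mono[OF mom]) (use pos in simp)
    also have "\<dots> = C / \<epsilon> ^ 4 * (1 / (w k)\<^sup>2)"
      using w[of k] \<epsilon> by (simp add: field_simps power2_eq_square power4_eq_xxxx)
    finally show ?thesis .
  qed
  then have "summable (\<lambda>k. measure M (A k))"
    by (intro summable_comparison_test[OF _ summable_mult[OF summ, of "C / \<epsilon> ^ 4"]]) auto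
  then have "AE \<omega> in M. eventually (\<lambda>k. \<omega> \<in> space M - A k) sequentially"
    by (intro borel_cantelli_AE1[OF A]) (auto simp: emeasure_eq_measure)
  then show ?thesis
  proof (rule AE_mp, intro AE_I2 impI)
    fix \<omega> assume "\<omega> \<in> space M" and "eventually (\<lambda>k. \<omega> \<in> space M - A k) sequentially"
    then show "eventually (\<lambda>k. \<bar>S k \<omega>\<bar> < \<epsilon> * w k) sequentially"
    proof (elim eventually_mono)
      fix k assume "\<omega> \<in> space M - A k"
      then have "S k \<omega> ^ 4 < (\<epsilon> * w k) ^ 4" unfolding A_def by auto
      then have "\<bar>S k \<omega>\<bar> ^ 4 < (\<epsilon> * w k) ^ 4" by (simp add: power_abs[symmetric] del: power_abs)
      then show "\<bar>S k \<omega>\<bar> < \<epsilon> * w k"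
        by (rule power_less_imp_less_base) (use \<epsilon> w[of k] in simp)
    qed
  qed
qed

lemma (in prob_space) AE_eventually_dyadic_martingale_sum_less:
  fixes F :: "nat \<Rightarrow> 'a measure" and D :: "nat \<Rightarrow> 'a \<Rightarrow> real" and a b :: "nat \<Rightarrow> real"
  assumes sub: "\<And>s. subalgebra M (F s)"
    and mono: "\<And>r s. r \<le> s \<Longrightarrow> sets (F r) \<subseteq> sets (F s)"
    and adapted: "\<And>s. 1 \<le> s \<Longrightarrow> D s \<in> borel_measurable (F s)"
    and bnd: "\<And>s \<omega>. 1 \<le> s \<Longrightarrow> \<omega> \<in> space M \<Longrightarrow> \<bar>D s \<omega>\<bar> \<le> b s"
    and orth: "\<And>s g. 1 \<le> s \<Longrightarrow> g \<in> borel_measurable (F (s - 1)) \<Longrightarrow> (\<exists>B. \<forall>\<omega>\<in>space M. \<bar>g \<omega>\<bar> \<le> B) \<Longrightarrow>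
                  expectation (\<lambda>\<omega>. g \<omega> * D s \<omega>) = 0"
    and ba: "\<And>s. 1 \<le> s \<Longrightarrow> (b s)\<^sup>2 \<le> \<beta> * a s"
    and pos: "\<And>k. 0 < (\<Sum>s\<in>{1..2 ^ k}. a s)"
    and summ: "summable (\<lambda>k. 1 / (\<Sum>s\<in>{1..2 ^ k}. a s)\<^sup>2)"
    and \<epsilon>: "0 < \<epsilon>"
  shows "AE \<omega> in M. eventually (\<lambda>k. \<bar>\<Sum>s\<in>{1..2 ^ k}. D s \<omega>\<bar> < \<epsilon> * (\<Sum>s\<in>{1..2 ^ k}. a s)) sequentially"
proof (rule AE_eventually_abs_less_of_fourth_moment[where C="11 * \<beta>\<^sup>2", OF _ _ _ pos summ \<epsilon>])
  fix k :: nat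
  have D_M: "D s \<in> borel_measurable M" if "1 \<le> s" for s
    using adapted[OF that] by (rule measurable_from_subalg[OF sub])
  then show "(\<lambda>\<omega>. \<Sum>s\<in>{1..2 ^ k}. D s \<omega>) \<in> borel_measurable M" by auto
  show "integrable M (\<lambda>\<omega>. (\<Sum>s\<in>{1..2 ^ k}. D s \<omega>) ^ 4)"
  proof (rule integrable_abs_le_const)
    fix \<omega> assume "\<omega> \<in> space M"
    then have "\<bar>\<Sum>s\<in>{1..2 ^ k}. D s \<omega>\<bar> \<le> (\<Sum>s\<in>{1..2 ^ k}. b s)"
      by (intro order_trans[OF sum_abs sum_mono]) (use bnd in auto)
    then show "\<bar>(\<Sum>s\<in>{1..2 ^ k}. D s \<omega>) ^ 4\<bar> \<le> (\<Sum>s\<in>{1..2 ^ k}. b s) ^ 4"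
      unfolding power_abs by (rule power_mono) simp
  qed (use D_M in auto)
  have "expectation (\<lambda>\<omega>. (\<Sum>s\<in>{1..2 ^ k}. D s \<omega>) ^ 4) \<le> 11 * (\<Sum>s\<in>{1..2 ^ k}. (b s)\<^sup>2)\<^sup>2"
    using martingale_difference_moments_le[of F D b "2 ^ k", OF sub mono adapted bnd orth] by blast
  also have "(\<Sum>s\<in>{1..2 ^ k}. (b s)\<^sup>2)\<^sup>2 \<le> (\<beta> * (\<Sum>s\<in>{1..2 ^ k}. a s))\<^sup>2"
    unfolding sum_distrib_left by (intro power_mono sum_mono ba sum_nonneg) auto
  finally show "expectation (\<lambda>\<omega>. (\<Sum>s\<in>{1..2 ^ k}. D s \<omega>) ^ 4) \<le> 11 * \<beta>\<^sup>2 * (\<Sum>s\<in>{1..2 ^ k}. a s)\<^sup>2"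
    by (simp add: power_mult_distrib)
qed

lemma (in prob_space) integral_mult_indep_set:
  fixes X :: "'a \<Rightarrow> real" and Z :: "'a \<Rightarrow> 'b::topological_space" and f :: "'b \<Rightarrow> real"
  assumes indep: "indep_set (sets N) (gen_sets M Z)" and N: "subalgebra M N"
    and X: "X \<in> borel_measurable N" and Z: "Z \<in> borel_measurable M" and f: "f \<in> borel_measurable borel"
    and int: "integrable M X" "integrable M (\<lambda>\<omega>. f (Z \<omega>))"
  shows "expectation (\<lambda>\<omega>. X \<omega> * f (Z \<omega>)) = expectation X * expectation (\<lambda>\<omega>. f (Z \<omega>))"
proof (rule indep_var_lebesgue_integral[OF _ int])
  have X_sets: "{X -` A \<inter> space M | A. A \<in> sets borel} \<subseteq> sets N"
    using measurable_sets[OF X] N by (auto simp: subalgebra_def)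
  have fZ_sets: "{(\<lambda>\<omega>. f (Z \<omega>)) -` A \<inter> space M | A. A \<in> sets borel} \<subseteq> gen_sets M Z"
  proof clarify
    fix A :: "real set" assume "A \<in> sets borel"
    then have "f -` A \<in> sets borel" using measurable_sets[OF f] by simp
    moreover have "(\<lambda>\<omega>. f (Z \<omega>)) -` A \<inter> space M = Z -` (f -` A) \<inter> space M" by auto
    ultimately show "(\<lambda>\<omega>. f (Z \<omega>)) -` A \<inter> space M \<in> gen_sets M Z" unfolding gen_sets_def by blast
  qed
  have rv: "random_variable borel X" "random_variable borel (\<lambda>\<omega>. f (Z \<omega>))"
    using measurable_from_subalg[OF N X] Z f by measurable
  show "indep_var borel X borel (\<lambda>\<omega>. f (Z \<omega>))"
    unfolding indep_var_def indep_vars_def2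
  proof (intro conjI ballI)
    fix i :: bool
    show "random_variable (case_bool borel borel i) (case_bool X (\<lambda>\<omega>. f (Z \<omega>)) i)"
      using rv by (cases i) simp_all
  next
    show "indep_sets (\<lambda>i. {case_bool X (\<lambda>\<omega>. f (Z \<omega>)) i -` A \<inter> space M | A. A \<in> sets (case_bool borel borel i)}) UNIV"
    proof (rule indep_sets_mono_sets[OF indep[unfolded indep_set_def]])
      fix i :: bool
      show "{case_bool X (\<lambda>\<omega>. f (Z \<omega>)) i -` A \<inter> space M | A. A \<in> sets (case_bool borel borel i)}
          \<subseteq> case_bool (sets N) (gen_sets M Z) i"
        using X_sets fZ_sets by (cases i) simp_all
    qed
  qed
qed

text \<open>X s * f (Z s) is a martingale difference because f (Z s) is centred and independent of
  G s, which contains the past F (s - 1) and determines X s.\<close>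
lemma (in prob_space) AE_eventually_dyadic_indep_product_sum_less:
  fixes F G :: "nat \<Rightarrow> 'a measure" and X :: "nat \<Rightarrow> 'a \<Rightarrow> real" and Z :: "nat \<Rightarrow> 'a \<Rightarrow> 'b::topological_space"
    and f :: "'b \<Rightarrow> real" and a bX :: "nat \<Rightarrow> real"
  assumes sub: "\<And>s. subalgebra M (F s)"
    and mono: "\<And>r s. r \<le> s \<Longrightarrow> sets (F r) \<subseteq> sets (F s)"
    and G: "\<And>s. 1 \<le> s \<Longrightarrow> space (G s) = space M"
      "\<And>s. 1 \<le> s \<Longrightarrow> sets (F (s - 1)) \<subseteq> sets (G s)" "\<And>s. 1 \<le> s \<Longrightarrow> sets (G s) \<subseteq> sets (F s)"
    and X: "\<And>s. 1 \<le> s \<Longrightarrow> X s \<in> borel_measurable (G s)"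
    and Z: "\<And>s. 1 \<le> s \<Longrightarrow> Z s \<in> borel_measurable (F s)"
    and indep: "\<And>s. 1 \<le> s \<Longrightarrow> indep_set (sets (G s)) (gen_sets M (Z s))"
    and f: "f \<in> borel_measurable borel" "\<And>s. 1 \<le> s \<Longrightarrow> expectation (\<lambda>\<omega>. f (Z s \<omega>)) = 0"
    and X_bnd: "\<And>s \<omega>. 1 \<le> s \<Longrightarrow> \<omega> \<in> space M \<Longrightarrow> \<bar>X s \<omega>\<bar> \<le> bX s"
    and f_bnd: "\<And>s \<omega>. 1 \<le> s \<Longrightarrow> \<omega> \<in> space M \<Longrightarrow> \<bar>f (Z s \<omega>)\<bar> \<le> Bf"
    and ba: "\<And>s. 1 \<le> s \<Longrightarrow> (bX s * Bf)\<^sup>2 \<le> \<beta> * a s"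
    and pos: "\<And>k. 0 < (\<Sum>s\<in>{1..2 ^ k}. a s)"
    and summ: "summable (\<lambda>k. 1 / (\<Sum>s\<in>{1..2 ^ k}. a s)\<^sup>2)"
    and \<epsilon>: "0 < \<epsilon>"
  shows "AE \<omega> in M. eventually (\<lambda>k. \<bar>\<Sum>s\<in>{1..2 ^ k}. X s \<omega> * f (Z s \<omega>)\<bar> < \<epsilon> * (\<Sum>s\<in>{1..2 ^ k}. a s)) sequentially"
proof (rule AE_eventually_dyadic_martingale_sum_less[OF sub mono _ _ _ ba pos summ \<epsilon>])
  have G_F: "subalgebra (F s) (G s)" and F_G: "subalgebra (G s) (F (s - 1))" and G_M: "subalgebra M (G s)"
    if "1 \<le> s" for s
    using sub[of s] sub[of "s - 1"] G[OF that] by (auto simp: subalgebra_def)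
  have Z_M: "Z s \<in> borel_measurable M" if "1 \<le> s" for s
    using Z[OF that] by (rule measurable_from_subalg[OF sub])
  fix s :: nat assume s: "1 \<le> s"
  show "(\<lambda>\<omega>. X s \<omega> * f (Z s \<omega>)) \<in> borel_measurable (F s)"
    using measurable_from_subalg[OF G_F[OF s] X[OF s]] Z[OF s] f(1) by measurable
  show "\<bar>X s \<omega> * f (Z s \<omega>)\<bar> \<le> bX s * Bf" if "\<omega> \<in> space M" for \<omega>
    unfolding abs_mult using X_bnd[OF s that] f_bnd[OF s that] by (intro mult_mono) auto
  fix g :: "'a \<Rightarrow> real" assume g: "g \<in> borel_measurable (F (s - 1))" and "\<exists>B. \<forall>\<omega>\<in>space M. \<bar>g \<omega>\<bar> \<le> B"
  then obtain B where B: "\<And>\<omega>. \<omega> \<in> space M \<Longrightarrow> \<bar>g \<omega>\<bar> \<le> B" by blast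
  have gX: "(\<lambda>\<omega>. g \<omega> * X s \<omega>) \<in> borel_measurable (G s)"
    using measurable_from_subalg[OF F_G[OF s] g] X[OF s] by measurable
  have "expectation (\<lambda>\<omega>. g \<omega> * (X s \<omega> * f (Z s \<omega>))) = expectation (\<lambda>\<omega>. (g \<omega> * X s \<omega>) * f (Z s \<omega>))"
    by (simp add: mult.assoc)
  also have "\<dots> = expectation (\<lambda>\<omega>. g \<omega> * X s \<omega>) * expectation (\<lambda>\<omega>. f (Z s \<omega>))"
  proof (rule integral_mult_indep_set[OF indep[OF s] G_M[OF s] gX Z_M[OF s] f(1)])
    have gX_bnd: "\<bar>g \<omega> * X s \<omega>\<bar> \<le> B * bX s" if "\<omega> \<in> space M" for \<omega>
      unfolding abs_mult using B[OF that] X_bnd[OF s that] order_trans[OF abs_ge_zero B[OF that]]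
      by (intro mult_mono) auto
    show "integrable M (\<lambda>\<omega>. g \<omega> * X s \<omega>)"
      by (rule integrable_abs_le_const[OF measurable_from_subalg[OF G_M[OF s] gX] gX_bnd])
    show "integrable M (\<lambda>\<omega>. f (Z s \<omega>))"
      using Z_M[OF s] f(1) f_bnd[OF s] by (intro integrable_abs_le_const[where B=Bf]) auto
  qed
  finally show "expectation (\<lambda>\<omega>. g \<omega> * (X s \<omega> * f (Z s \<omega>))) = 0" using f(2)[OF s] by simp
qed

section \<open>Step sizes\<close>

lemma sum_atLeastAtMost_double_le:
  fixes f :: "nat \<Rightarrow> real"
  assumes antimono: "\<And>s t. 1 \<le> s \<Longrightarrow> s \<le> t \<Longrightarrow> f t \<le> f s"
  shows "(\<Sum>s\<in>{1..2 * n}. f s) \<le> 2 * (\<Sum>s\<in>{1..n}. f s)"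
proof (induction n)
  case (Suc n)
  have "f (Suc (2 * n)) \<le> f (Suc n)" "f (Suc (Suc (2 * n))) \<le> f (Suc n)" by (auto intro: antimono)
  with Suc.IH show ?case by (simp add: sum.cl_ivl_Suc)
qed simp

lemma sum_atLeastAtMost_ge_card_mult_last:
  fixes f :: "nat \<Rightarrow> real"
  assumes antimono: "\<And>s t. 1 \<le> s \<Longrightarrow> s \<le> t \<Longrightarrow> f t \<le> f s"
  shows "real n * f n \<le> (\<Sum>s\<in>{1..n}. f s)"
proof -
  have "(\<Sum>s\<in>{1..n}. f n) \<le> (\<Sum>s\<in>{1..n}. f s)" by (rule sum_mono) (auto intro: antimono)
  then show ?thesis by simp
qed

lemma powr_minus_square_antimono:
  assumes "0 \<le> \<eta>" "1 \<le> s" "s \<le> t"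
  shows "(real t powr (-\<eta>))\<^sup>2 \<le> (real s powr (-\<eta>))\<^sup>2"
  using assms by (intro power_mono powr_mono2') auto

lemma sum_powr_minus_square_ge:
  assumes "0 \<le> \<eta>" "1 \<le> n"
  shows "real n powr (1 - 2 * \<eta>) \<le> (\<Sum>s\<in>{1..n}. (real s powr (-\<eta>))\<^sup>2)"
proof -
  have "real n powr (1 - 2 * \<eta>) = real n * (real n powr (-\<eta>))\<^sup>2"
    using assms by (simp add: powr_diff powr_minus_divide power2_eq_square powr_add[symmetric] powr_mult_base)
  also have "\<dots> \<le> (\<Sum>s\<in>{1..n}. (real s powr (-\<eta>))\<^sup>2)"
    by (rule sum_atLeastAtMost_ge_card_mult_last) (use assms powr_minus_square_antimono in auto)
  finally show ?thesis .
qed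

lemma summable_inverse_square_sum_powr_minus_square:
  assumes "0 \<le> \<eta>" "\<eta> < 1/2"
  shows "summable (\<lambda>k. 1 / (\<Sum>s\<in>{1..2 ^ k}. (real s powr (-\<eta>))\<^sup>2)\<^sup>2)"
proof (rule summable_comparison_test[OF _ summable_geometric])
  define r where "r = (2::real) powr (1 - 2 * \<eta>)"
  have r: "1 < r" unfolding r_def using assms by simp
  show "norm (1 / r\<^sup>2) < 1" using r by simp
  have "norm (1 / (\<Sum>s\<in>{1..2 ^ k}. (real s powr (-\<eta>))\<^sup>2)\<^sup>2) \<le> (1 / r\<^sup>2) ^ k" for k
  proof -
    have "r ^ k = real (2 ^ k) powr (1 - 2 * \<eta>)"
      unfolding r_def by (simp add: powr_realpow[symmetric] powr_powr mult.commute powr_power)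
    also have "\<dots> \<le> (\<Sum>s\<in>{1..2 ^ k}. (real s powr (-\<eta>))\<^sup>2)"
      by (rule sum_powr_minus_square_ge) (use assms in auto)
    finally have "(r ^ k)\<^sup>2 \<le> (\<Sum>s\<in>{1..2 ^ k}. (real s powr (-\<eta>))\<^sup>2)\<^sup>2"
      using r by (intro power_mono) auto
    moreover have "0 < (r ^ k)\<^sup>2" using r by simp
    ultimately have "0 < (\<Sum>s\<in>{1..2 ^ k}. (real s powr (-\<eta>))\<^sup>2)\<^sup>2 * (r ^ k)\<^sup>2"
      by (intro mult_pos_pos) auto
    with \<open>(r ^ k)\<^sup>2 \<le> _\<close> have "1 / (\<Sum>s\<in>{1..2 ^ k}. (real s powr (-\<eta>))\<^sup>2)\<^sup>2 \<le> 1 / (r ^ k)\<^sup>2"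
      by (intro divide_left_mono) auto
    then show ?thesis by (simp add: power_divide power_mult[symmetric] mult.commute flip: power_mult)
  qed
  then show "\<exists>N. \<forall>k\<ge>N. norm (1 / (\<Sum>s\<in>{1..2 ^ k}. (real s powr (-\<eta>))\<^sup>2)\<^sup>2) \<le> (1 / r\<^sup>2) ^ k" by blast
qed

lemma dyadic_lower_bound_extends:
  fixes Q W :: "nat \<Rightarrow> real"
  assumes "mono Q" "mono W" and double: "\<And>n. W (2 * n) \<le> 2 * W n" and "0 \<le> K"
    and dyadic: "\<And>k. n \<le> k \<Longrightarrow> K * W (2 ^ k) \<le> Q (2 ^ k)"
    and t: "2 ^ n \<le> t"
  shows "K / 2 * W t \<le> Q t"
proof -
  have "1 \<le> t" using t one_le_power[of "2::nat" n] by linarith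
  then obtain k where k: "2 ^ k \<le> t" "t < 2 ^ (k + 1)" using ex_power_ivl1[of 2 t] by auto
  have "n \<le> k"
  proof (rule ccontr)
    assume "\<not> n \<le> k"
    then have "(2::nat) ^ (k + 1) \<le> 2 ^ n" by (intro power_increasing) auto
    then show False using k t by simp
  qed
  have "W t \<le> 2 * W (2 ^ k)"
    using monoD[OF \<open>mono W\<close>, of t "2 * 2 ^ k"] double[of "2 ^ k"] k by simp
  then have "K / 2 * W t \<le> K / 2 * (2 * W (2 ^ k))" using \<open>0 \<le> K\<close> by (intro mult_left_mono) auto
  also have "\<dots> = K * W (2 ^ k)" by simp
  also have "\<dots> \<le> Q (2 ^ k)" using dyadic[OF \<open>n \<le> k\<close>] .
  also have "\<dots> \<le> Q t" using monoD[OF \<open>mono Q\<close> k(1)] .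
  finally show ?thesis .
qed

section \<open>The pricing model\<close>

locale pricing_model = prob_space M for M :: "'a measure" +
  fixes F :: "nat \<Rightarrow> 'a measure"
    and c :: "nat \<Rightarrow> 'a \<Rightarrow> real ^ 'k"
    and u :: "nat \<Rightarrow> 'a \<Rightarrow> real ^ 'm"
    and pbar :: "nat \<Rightarrow> 'a \<Rightarrow> real ^ 'm"
    and \<eta> :: real
  assumes eta_nonneg: "0 \<le> \<eta>" and eta_less: "\<eta> < 1/2"
    and F_subalgebra: "\<And>s. subalgebra M (F s)"
    and F_mono: "\<And>s. sets (F s) \<subseteq> sets (F (Suc s))"
    and c_adapted: "\<And>s. s \<ge> 1 \<Longrightarrow> c s \<in> borel_measurable (F s)"
    and c_distr: "\<And>s. s \<ge> 1 \<Longrightarrow> distr M borel (c s) = distr M borel (c 1)"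
    and c_indep: "\<And>s. s \<ge> 1 \<Longrightarrow> indep_set (sets (F (s - 1))) (gen_sets M (c s))"
    and c_bounded: "\<exists>B. \<forall>s\<ge>1. \<forall>\<omega>\<in>space M. norm (c s \<omega>) \<le> B"
    and c_pos_def: "pos_def (expectation (\<lambda>\<omega>. outer (c 1 \<omega>)))"
    and pbar_measurable: "\<And>s. s \<ge> 1 \<Longrightarrow> pbar s \<in> borel_measurable (past_ctx M F c s)"
    and pbar_bounded: "\<exists>B. \<forall>s\<ge>1. \<forall>\<omega>\<in>space M. norm (pbar s \<omega>) \<le> B"
    and u_adapted: "\<And>s. s \<ge> 1 \<Longrightarrow> u s \<in> borel_measurable (F s)"
    and u_distr: "\<And>s. s \<ge> 1 \<Longrightarrow> distr M borel (u s) = distr M borel (u 1)"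
    and u_indep: "\<And>s. s \<ge> 1 \<Longrightarrow> indep_set (sets (past_ctx M F c s)) (gen_sets M (u s))"
    and u_bounded: "\<exists>B. \<forall>s\<ge>1. \<forall>\<omega>\<in>space M. norm (u s \<omega>) \<le> B"
    and u_mean_zero: "expectation (u 1) = 0"
    and u_pos_def: "pos_def (expectation (\<lambda>\<omega>. outer (u 1 \<omega>)))"
begin

definition ctx_moment :: "real^'k^'k" where
  "ctx_moment = expectation (\<lambda>\<omega>. outer (c 1 \<omega>))"

definition pert_moment :: "real^'m^'m" where
  "pert_moment = expectation (\<lambda>\<omega>. outer (u 1 \<omega>))"

definition ctx_bound :: real where
  "ctx_bound = (SOME B. \<forall>s\<ge>1. \<forall>\<omega>\<in>space M. norm (c s \<omega>) \<le> B)"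

definition pbar_bound :: real where
  "pbar_bound = (SOME B. \<forall>s\<ge>1. \<forall>\<omega>\<in>space M. norm (pbar s \<omega>) \<le> B)"

definition pert_bound :: real where
  "pert_bound = (SOME B. \<forall>s\<ge>1. \<forall>\<omega>\<in>space M. norm (u s \<omega>) \<le> B)"

definition step_sq_sum :: "nat \<Rightarrow> real" where
  "step_sq_sum t = (\<Sum>s\<in>{1..t}. (real s powr (-\<eta>))\<^sup>2)"

definition design_matrix :: "nat \<Rightarrow> 'a \<Rightarrow> real^('m + 'k)^('m + 'k)" where
  "design_matrix t \<omega> = (\<Sum>s\<in>{1..t}. outer (stack (pbar s \<omega> + (real s powr (-\<eta>)) *\<^sub>R u s \<omega>) (c s \<omega>)))"

lemma F_mono_le: "r \<le> s \<Longrightarrow> sets (F r) \<subseteq> sets (F s)"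
  using lift_Suc_mono_le[of "\<lambda>s. sets (F s)", OF F_mono] .

lemma space_past_ctx: "space (past_ctx M F c s) = space M"
  unfolding past_ctx_def by (simp add: space_measure_of_conv)

lemma sets_past_ctx:
  "sets (past_ctx M F c s) = sigma_sets (space M) (sets (F (s - 1)) \<union> {c s -` A \<inter> space M | A. A \<in> sets borel})"
proof -
  have "sets (F (s - 1)) \<subseteq> Pow (space M)"
    using sets.sets_into_space F_subalgebra[of "s - 1"] by (auto simp: subalgebra_def)
  then show ?thesis unfolding past_ctx_def by (intro sets_measure_of) auto
qed

lemma past_ctx_between:
  assumes "1 \<le> s"
  shows "space (past_ctx M F c s) = space M" "sets (F (s - 1)) \<subseteq> sets (past_ctx M F c s)"
    "sets (past_ctx M F c s) \<subseteq> sets (F s)"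
proof -
  show "space (past_ctx M F c s) = space M" by (rule space_past_ctx)
  show "sets (F (s - 1)) \<subseteq> sets (past_ctx M F c s)"
    unfolding sets_past_ctx by (auto intro: sigma_sets.Basic)
  have "sigma_algebra (space M) (sets (F s))"
    using sets.sigma_algebra_axioms[of "F s"] F_subalgebra[of s] by (simp add: subalgebra_def)
  moreover have "sets (F (s - 1)) \<union> {c s -` A \<inter> space M | A. A \<in> sets borel} \<subseteq> sets (F s)"
    using F_mono_le[of "s - 1" s] measurable_sets[OF c_adapted[OF assms]] F_subalgebra[of s]
    by (auto simp: subalgebra_def)
  ultimately show "sets (past_ctx M F c s) \<subseteq> sets (F s)"
    unfolding sets_past_ctx by (rule sigma_algebra.sigma_sets_subset)
qed

lemma c_measurable_past_ctx: "c s \<in> borel_measurable (past_ctx M F c s)"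
  by (auto simp: measurable_def space_past_ctx sets_past_ctx intro: sigma_sets.Basic)

lemma
  assumes "1 \<le> s"
  shows c_measurable: "c s \<in> borel_measurable M"
    and u_measurable: "u s \<in> borel_measurable M"
  using measurable_from_subalg[OF F_subalgebra] c_adapted[OF assms] u_adapted[OF assms] by blast+

lemma norm_c_le: "1 \<le> s \<Longrightarrow> \<omega> \<in> space M \<Longrightarrow> norm (c s \<omega>) \<le> ctx_bound"
  using someI_ex[OF c_bounded] unfolding ctx_bound_def by blast

lemma norm_pbar_le: "1 \<le> s \<Longrightarrow> \<omega> \<in> space M \<Longrightarrow> norm (pbar s \<omega>) \<le> pbar_bound"
  using someI_ex[OF pbar_bounded] unfolding pbar_bound_def by blast

lemma norm_u_le: "1 \<le> s \<Longrightarrow> \<omega> \<in> space M \<Longrightarrow> norm (u s \<omega>) \<le> pert_bound"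
  using someI_ex[OF u_bounded] unfolding pert_bound_def by blast

lemma bounds_nonneg: "0 \<le> ctx_bound" "0 \<le> pbar_bound" "0 \<le> pert_bound"
proof -
  obtain \<omega> where "\<omega> \<in> space M" using not_empty by blast
  then show "0 \<le> ctx_bound" "0 \<le> pbar_bound" "0 \<le> pert_bound"
    using norm_c_le[of 1 \<omega>] norm_pbar_le[of 1 \<omega>] norm_u_le[of 1 \<omega>] by (auto intro: order_trans[OF norm_ge_zero])
qed

lemma expectation_c_eq:
  fixes f :: "real^'k \<Rightarrow> real"
  assumes "1 \<le> s" and f: "f \<in> borel_measurable borel"
  shows "expectation (\<lambda>\<omega>. f (c s \<omega>)) = expectation (\<lambda>\<omega>. f (c 1 \<omega>))"
proof -
  have "expectation (\<lambda>\<omega>. f (c s \<omega>)) = integral\<^sup>L (distr M borel (c s)) f"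
    by (rule integral_distr[OF c_measurable[OF assms(1)] f, symmetric])
  also have "\<dots> = integral\<^sup>L (distr M borel (c 1)) f" using c_distr[OF assms(1)] by simp
  also have "\<dots> = expectation (\<lambda>\<omega>. f (c 1 \<omega>))" by (rule integral_distr[OF c_measurable f]) simp
  finally show ?thesis .
qed

lemma expectation_u_eq:
  fixes f :: "real^'m \<Rightarrow> real"
  assumes "1 \<le> s" and f: "f \<in> borel_measurable borel"
  shows "expectation (\<lambda>\<omega>. f (u s \<omega>)) = expectation (\<lambda>\<omega>. f (u 1 \<omega>))"
proof -
  have "expectation (\<lambda>\<omega>. f (u s \<omega>)) = integral\<^sup>L (distr M borel (u s)) f"
    by (rule integral_distr[OF u_measurable[OF assms(1)] f, symmetric])
  also have "\<dots> = integral\<^sup>L (distr M borel (u 1)) f" using u_distr[OF assms(1)] by simp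
  also have "\<dots> = expectation (\<lambda>\<omega>. f (u 1 \<omega>))" by (rule integral_distr[OF u_measurable f]) simp
  finally show ?thesis .
qed

lemma ctx_moment_nth: "ctx_moment $ i $ j = expectation (\<lambda>\<omega>. c 1 \<omega> $ i * c 1 \<omega> $ j)"
proof -
  have "integrable M (\<lambda>\<omega>. outer (c 1 \<omega>))"
    using pos_def_neq_0[OF c_pos_def] not_integrable_integral_eq by blast
  then show ?thesis unfolding ctx_moment_def by (simp add: integral_mat_nth outer_def)
qed

lemma pert_moment_nth: "pert_moment $ i $ j = expectation (\<lambda>\<omega>. u 1 \<omega> $ i * u 1 \<omega> $ j)"
proof -
  have "integrable M (\<lambda>\<omega>. outer (u 1 \<omega>))"
    using pos_def_neq_0[OF u_pos_def] not_integrable_integral_eq by blast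
  then show ?thesis unfolding pert_moment_def by (simp add: integral_mat_nth outer_def)
qed

lemma expectation_u_nth: "expectation (\<lambda>\<omega>. u 1 \<omega> $ j) = 0"
proof -
  have "integrable M (u 1)"
    using u_measurable[of 1] norm_u_le[of 1] by (intro integrable_const_bound[where B=pert_bound]) auto
  then show ?thesis using u_mean_zero integral_vec_nth[of M "u 1" j] by simp
qed

lemma step_size_le_one: "1 \<le> s \<Longrightarrow> real s powr (-\<eta>) \<le> 1"
  using eta_nonneg by (simp add: powr_minus_divide ge_one_powr_ge_zero)

lemma step_sq_sum_pos: "0 < step_sq_sum (2 ^ k)"
proof -
  have "0 < real (2 ^ k) powr (1 - 2 * \<eta>)" by simp
  also have "\<dots> \<le> step_sq_sum (2 ^ k)"
    unfolding step_sq_sum_def by (rule sum_powr_minus_square_ge[OF eta_nonneg]) simp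
  finally show ?thesis .
qed

lemma summable_step_sq_sum: "summable (\<lambda>k. 1 / (step_sq_sum (2 ^ k))\<^sup>2)"
  unfolding step_sq_sum_def by (rule summable_inverse_square_sum_powr_minus_square[OF eta_nonneg eta_less])

lemma abs_c_nth_mult_le: "1 \<le> s \<Longrightarrow> \<omega> \<in> space M \<Longrightarrow> \<bar>c s \<omega> $ i * c s \<omega> $ j\<bar> \<le> ctx_bound\<^sup>2"
  unfolding abs_mult power2_eq_square
  by (intro mult_mono norm_bound_component_le_cart norm_c_le) (auto simp: bounds_nonneg)

lemma abs_u_nth_mult_le: "1 \<le> s \<Longrightarrow> \<omega> \<in> space M \<Longrightarrow> \<bar>u s \<omega> $ i * u s \<omega> $ j\<bar> \<le> pert_bound\<^sup>2"
  unfolding abs_mult power2_eq_square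
  by (intro mult_mono norm_bound_component_le_cart norm_u_le) (auto simp: bounds_nonneg)

lemma AE_context_moments:
  assumes "0 < e"
  shows "AE \<omega> in M. eventually (\<lambda>k. \<forall>i j.
           \<bar>\<Sum>s\<in>{1..2 ^ k}. c s \<omega> $ i * c s \<omega> $ j - ctx_moment $ i $ j\<bar> < e * 2 ^ k) sequentially"
proof (rule AE_eventually_all_finite2)
  fix i j
  define f where "f z = z $ i * z $ j - ctx_moment $ i $ j" for z :: "real^'k"
  define Bf where "Bf = ctx_bound\<^sup>2 + \<bar>ctx_moment $ i $ j\<bar>"
  have f: "f \<in> borel_measurable borel" unfolding f_def by measurable
  have "AE \<omega> in M. eventually (\<lambda>k. \<bar>\<Sum>s\<in>{1..2 ^ k}. 1 * f (c s \<omega>)\<bar> < e * (\<Sum>s\<in>{1..(2::nat) ^ k}. 1)) sequentially"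
  proof (rule AE_eventually_dyadic_indep_product_sum_less[OF F_subalgebra F_mono_le _ _ _ _ c_adapted c_indep f,
        where bX="\<lambda>_. 1" and Bf=Bf and \<beta>="Bf\<^sup>2"])
    fix s :: nat assume s: "1 \<le> s"
    show "space (F (s - 1)) = space M" using F_subalgebra by (simp add: subalgebra_def)
    show "sets (F (s - 1)) \<subseteq> sets (F s)" by (rule F_mono_le) simp
    have "integrable M (\<lambda>\<omega>. c 1 \<omega> $ i * c 1 \<omega> $ j)"
      using c_measurable[of 1] abs_c_nth_mult_le[of 1] by (intro integrable_abs_le_const) (auto simp del: One_nat_def)
    then show "expectation (\<lambda>\<omega>. f (c s \<omega>)) = 0"
      unfolding expectation_c_eq[OF s f] by (simp add: f_def ctx_moment_nth prob_space)
    fix \<omega> assume "\<omega> \<in> space M"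
    then show "\<bar>f (c s \<omega>)\<bar> \<le> Bf"
      using abs_c_nth_mult_le[OF s, of \<omega> i j] abs_triangle_ineq4[of "c s \<omega> $ i * c s \<omega> $ j"]
      unfolding f_def Bf_def by linarith
  next
    \<comment> \<open>the case \<eta> = 0 of the step-size estimates\<close>
    have "(\<Sum>s\<in>{1..2 ^ k}. (real s powr (-0))\<^sup>2) = (\<Sum>s\<in>{1..(2::nat) ^ k}. 1::real)" for k
      by (rule sum.cong) auto
    then show "summable (\<lambda>k. 1 / (\<Sum>s\<in>{1..(2::nat) ^ k}. 1::real)\<^sup>2)"
      using summable_inverse_square_sum_powr_minus_square[of 0] by simp
  qed (use assms in simp_all)
  then show "AE \<omega> in M. eventually (\<lambda>k.
      \<bar>\<Sum>s\<in>{1..2 ^ k}. c s \<omega> $ i * c s \<omega> $ j - ctx_moment $ i $ j\<bar> < e * 2 ^ k) sequentially"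
    by (simp add: f_def)
qed

lemma AE_perturbation_moments:
  assumes "0 < e"
  shows "AE \<omega> in M. eventually (\<lambda>k. \<forall>i j. \<bar>\<Sum>s\<in>{1..2 ^ k}.
           (real s powr (-\<eta>))\<^sup>2 * (u s \<omega> $ i * u s \<omega> $ j - pert_moment $ i $ j)\<bar> < e * step_sq_sum (2 ^ k)) sequentially"
proof (rule AE_eventually_all_finite2)
  fix i j
  define f where "f z = z $ i * z $ j - pert_moment $ i $ j" for z :: "real^'m"
  define Bf where "Bf = pert_bound\<^sup>2 + \<bar>pert_moment $ i $ j\<bar>"
  have f: "f \<in> borel_measurable borel" unfolding f_def by measurable
  have "AE \<omega> in M. eventually (\<lambda>k. \<bar>\<Sum>s\<in>{1..2 ^ k}. (real s powr (-\<eta>))\<^sup>2 * f (u s \<omega>)\<bar>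
      < e * (\<Sum>s\<in>{1..2 ^ k}. (real s powr (-\<eta>))\<^sup>2)) sequentially"
  proof (rule AE_eventually_dyadic_indep_product_sum_less[where G="past_ctx M F c",
        OF F_subalgebra F_mono_le past_ctx_between _ u_adapted u_indep f,
        where bX="\<lambda>s. (real s powr (-\<eta>))\<^sup>2" and Bf=Bf and \<beta>="Bf\<^sup>2"])
    fix s :: nat assume s: "1 \<le> s"
    have "integrable M (\<lambda>\<omega>. u 1 \<omega> $ i * u 1 \<omega> $ j)"
      using u_measurable[of 1] abs_u_nth_mult_le[of 1] by (intro integrable_abs_le_const) (auto simp del: One_nat_def)
    then show "expectation (\<lambda>\<omega>. f (u s \<omega>)) = 0"
      unfolding expectation_u_eq[OF s f] by (simp add: f_def pert_moment_nth prob_space)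
    have "(real s powr (-\<eta>))\<^sup>2 \<le> 1" using step_size_le_one[OF s] by (simp add: power_le_one)
    then have "((real s powr (-\<eta>))\<^sup>2)\<^sup>2 \<le> (real s powr (-\<eta>))\<^sup>2"
      by (simp add: power2_eq_square mult_left_le)
    then show "((real s powr (-\<eta>))\<^sup>2 * Bf)\<^sup>2 \<le> Bf\<^sup>2 * (real s powr (-\<eta>))\<^sup>2"
      by (simp add: power_mult_distrib mult.commute mult_left_mono)
    fix \<omega> assume "\<omega> \<in> space M"
    then show "\<bar>f (u s \<omega>)\<bar> \<le> Bf"
      using abs_u_nth_mult_le[OF s, of \<omega> i j] abs_triangle_ineq4[of "u s \<omega> $ i * u s \<omega> $ j"]
      unfolding f_def Bf_def by linarith
  qed (use assms step_sq_sum_pos summable_step_sq_sum in \<open>simp_all add: step_sq_sum_def\<close>)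
  then show "AE \<omega> in M. eventually (\<lambda>k. \<bar>\<Sum>s\<in>{1..2 ^ k}. (real s powr (-\<eta>))\<^sup>2 *
      (u s \<omega> $ i * u s \<omega> $ j - pert_moment $ i $ j)\<bar> < e * step_sq_sum (2 ^ k)) sequentially"
    by (simp add: f_def step_sq_sum_def)
qed

lemma abs_stack_pbar_c_nth_le:
  assumes "1 \<le> s" "\<omega> \<in> space M"
  shows "\<bar>stack (pbar s \<omega>) (c s \<omega>) $ i\<bar> \<le> pbar_bound + ctx_bound"
proof (cases i)
  case (Inl j)
  then show ?thesis
    using norm_bound_component_le_cart[OF norm_pbar_le[OF assms], of j] bounds_nonneg by (simp add: stack_def)
next
  case (Inr j)
  then show ?thesis
    using norm_bound_component_le_cart[OF norm_c_le[OF assms], of j] bounds_nonneg by (simp add: stack_def)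
qed

lemma AE_cross_moments:
  assumes "0 < e"
  shows "AE \<omega> in M. eventually (\<lambda>k. \<forall>i j. \<bar>\<Sum>s\<in>{1..2 ^ k}.
           real s powr (-\<eta>) * (stack (pbar s \<omega>) (c s \<omega>) $ i * u s \<omega> $ j)\<bar> < e * step_sq_sum (2 ^ k)) sequentially"
proof (rule AE_eventually_all_finite2)
  fix i j
  define B where "B = pbar_bound + ctx_bound"
  define f where "f z = z $ j" for z :: "real^'m"
  have f: "f \<in> borel_measurable borel" unfolding f_def by measurable
  have "AE \<omega> in M. eventually (\<lambda>k. \<bar>\<Sum>s\<in>{1..2 ^ k}. (real s powr (-\<eta>) * stack (pbar s \<omega>) (c s \<omega>) $ i) * f (u s \<omega>)\<bar>
      < e * (\<Sum>s\<in>{1..2 ^ k}. (real s powr (-\<eta>))\<^sup>2)) sequentially"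
  proof (rule AE_eventually_dyadic_indep_product_sum_less[where F=F and G="past_ctx M F c" and Z=u and f=f
        and bX="\<lambda>s. real s powr (-\<eta>) * B" and Bf=pert_bound and \<beta>="(B * pert_bound)\<^sup>2"])
    fix s :: nat assume s: "1 \<le> s"
    show "u s \<in> borel_measurable (F s)" "indep_set (sets (past_ctx M F c s)) (gen_sets M (u s))"
      using u_adapted[OF s] u_indep[OF s] .
    show "space (past_ctx M F c s) = space M" "sets (F (s - 1)) \<subseteq> sets (past_ctx M F c s)"
      "sets (past_ctx M F c s) \<subseteq> sets (F s)"
      using past_ctx_between[OF s] by auto
    show "(\<lambda>\<omega>. real s powr (-\<eta>) * stack (pbar s \<omega>) (c s \<omega>) $ i) \<in> borel_measurable (past_ctx M F c s)"
      using pbar_measurable[OF s] c_measurable_past_ctx[of s] by (cases i) (simp_all add: stack_def)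
    show "expectation (\<lambda>\<omega>. f (u s \<omega>)) = 0"
      using expectation_u_eq[OF s f] expectation_u_nth by (simp add: f_def)
    show "(real s powr (-\<eta>) * B * pert_bound)\<^sup>2 \<le> (B * pert_bound)\<^sup>2 * (real s powr (-\<eta>))\<^sup>2"
      by (simp add: power_mult_distrib)
    fix \<omega> assume \<omega>: "\<omega> \<in> space M"
    show "\<bar>real s powr (-\<eta>) * stack (pbar s \<omega>) (c s \<omega>) $ i\<bar> \<le> real s powr (-\<eta>) * B"
      unfolding B_def abs_mult using abs_stack_pbar_c_nth_le[OF s \<omega>] by (simp add: mult_left_mono)
    show "\<bar>f (u s \<omega>)\<bar> \<le> pert_bound"
      using norm_u_le[OF s \<omega>] unfolding f_def by (rule norm_bound_component_le_cart)
  qed (use assms f F_subalgebra F_mono_le step_sq_sum_pos summable_step_sq_sum in \<open>simp_all add: step_sq_sum_def\<close>)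
  then show "AE \<omega> in M. eventually (\<lambda>k. \<bar>\<Sum>s\<in>{1..2 ^ k}. real s powr (-\<eta>) *
      (stack (pbar s \<omega>) (c s \<omega>) $ i * u s \<omega> $ j)\<bar> < e * step_sq_sum (2 ^ k)) sequentially"
    by (simp add: f_def step_sq_sum_def mult.assoc)
qed

lemma min_eig_moments_pos: "0 < min_eig ctx_moment" "0 < min_eig pert_moment"
  using pos_def_min_eig_pos c_pos_def u_pos_def unfolding ctx_moment_def pert_moment_def by blast+

lemma min_eig_moments_le:
  "min_eig ctx_moment * (w \<bullet> w) \<le> w \<bullet> (ctx_moment *v w)"
  "min_eig pert_moment * (z \<bullet> z) \<le> z \<bullet> (pert_moment *v z)"
  using min_eig_le_quadratic_form c_pos_def u_pos_def unfolding ctx_moment_def pert_moment_def pos_def_def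
  by blast+

lemma design_matrix_dyadic_ge:
  fixes ec eu ex \<delta> :: real
  assumes \<omega>: "\<omega> \<in> space M"
    and \<delta>: "0 < \<delta>" "8 * (pbar_bound + pert_bound)\<^sup>2 \<le> \<delta> * min_eig ctx_moment"
    and e: "ec * CARD('k) \<le> min_eig ctx_moment / 2" "eu * CARD('m) \<le> min_eig pert_moment / 2"
      "ex * (CARD('m) + CARD('m + 'k)) \<le> min_eig pert_moment / (4 * (1 + \<delta>))" "0 \<le> ex"
    and ctx: "\<And>i j. \<bar>\<Sum>s\<in>{1..2 ^ k}. c s \<omega> $ i * c s \<omega> $ j - ctx_moment $ i $ j\<bar> < ec * 2 ^ k"
    and pert: "\<And>i j. \<bar>\<Sum>s\<in>{1..2 ^ k}. (real s powr (-\<eta>))\<^sup>2 * (u s \<omega> $ i * u s \<omega> $ j - pert_moment $ i $ j)\<bar>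
                 < eu * step_sq_sum (2 ^ k)"
    and cross: "\<And>i j. \<bar>\<Sum>s\<in>{1..2 ^ k}. real s powr (-\<eta>) * (stack (pbar s \<omega>) (c s \<omega>) $ i * u s \<omega> $ j)\<bar>
                 < ex * step_sq_sum (2 ^ k)"
  shows "min (min_eig ctx_moment * \<delta> / (8 * (1 + \<delta>))) (min_eig pert_moment / (4 * (1 + \<delta>)))
           * step_sq_sum (2 ^ k) * (v \<bullet> v) \<le> v \<bullet> (design_matrix (2 ^ k) \<omega> *v v)"
  unfolding design_matrix_def
proof (rule quadratic_form_sum_outer_stack_ge[OF _ _ \<delta> min_eig_moments_pos(1) min_eig_moments_le(1)
      min_eig_moments_pos(2) min_eig_moments_le(2) _ _ e(1) _ e(2) _ e(3,4)])
  fix s :: nat assume "s \<in> {1..2 ^ k}"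
  then have s: "1 \<le> s" by simp
  show "0 \<le> real s powr (-\<eta>) \<and> real s powr (-\<eta>) \<le> 1" using step_size_le_one[OF s] by simp
  have "real s powr (-\<eta>) * norm (u s \<omega>) \<le> 1 * pert_bound"
    using norm_u_le[OF s \<omega>] step_size_le_one[OF s] by (intro mult_mono) auto
  then have "norm (pbar s \<omega> + real s powr (-\<eta>) *\<^sub>R u s \<omega>) \<le> pbar_bound + 1 * pert_bound"
    using norm_pbar_le[OF s \<omega>] by (intro order_trans[OF norm_triangle_ineq] add_mono) auto
  then show "norm (pbar s \<omega> + real s powr (-\<eta>) *\<^sub>R u s \<omega>) \<le> pbar_bound + pert_bound" by simp
next
  show "step_sq_sum (2 ^ k) = (\<Sum>s\<in>{1..2 ^ k}. (real s powr (-\<eta>))\<^sup>2)" by (rule step_sq_sum_def)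
next
  fix i j
  show "\<bar>(\<Sum>s\<in>{1..2 ^ k}. c s \<omega> $ i * c s \<omega> $ j) - card {1..(2::nat) ^ k} * ctx_moment $ i $ j\<bar> \<le> ec * card {1..(2::nat) ^ k}"
    using ctx[of i j] by (simp add: sum_subtractf)
next
  fix i j
  show "\<bar>(\<Sum>s\<in>{1..2 ^ k}. (real s powr (-\<eta>))\<^sup>2 * (u s \<omega> $ i * u s \<omega> $ j)) - step_sq_sum (2 ^ k) * pert_moment $ i $ j\<bar>
      \<le> eu * step_sq_sum (2 ^ k)"
    using pert[of i j] by (simp add: step_sq_sum_def right_diff_distrib sum_subtractf sum_distrib_right)
next
  fix i j
  show "\<bar>\<Sum>s\<in>{1..2 ^ k}. real s powr (-\<eta>) * (stack (pbar s \<omega>) (c s \<omega>) $ i * u s \<omega> $ j)\<bar> \<le> ex * step_sq_sum (2 ^ k)"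
    using cross[of i j] by simp
qed

lemma AE_dyadic_design_matrix_ge:
  obtains K where "0 < K"
    and "AE \<omega> in M. \<exists>k0. \<forall>k\<ge>k0. \<forall>v. K * step_sq_sum (2 ^ k) * (v \<bullet> v) \<le> v \<bullet> (design_matrix (2 ^ k) \<omega> *v v)"
proof -
  define lc where "lc = min_eig ctx_moment"
  define lu where "lu = min_eig pert_moment"
  define \<delta> where "\<delta> = 8 * (pbar_bound + pert_bound)\<^sup>2 / lc + 1"
  define ec where "ec = lc / 2 / CARD('k)"
  define eu where "eu = lu / 2 / CARD('m)"
  define ex where "ex = lu / (4 * (1 + \<delta>)) / (CARD('m) + CARD('m + 'k))"
  have lc: "0 < lc" and lu: "0 < lu" using min_eig_moments_pos by (simp_all add: lc_def lu_def)
  have \<delta>: "0 < \<delta>" "8 * (pbar_bound + pert_bound)\<^sup>2 \<le> \<delta> * lc"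
    using lc by (simp_all add: \<delta>_def add_pos_nonneg field_simps)
  have e: "0 < ec" "0 < eu" "0 < ex" using lc lu \<delta> by (simp_all add: ec_def eu_def ex_def add_pos_pos)
  define good where "good \<omega> k \<longleftrightarrow>
      (\<forall>i j. \<bar>\<Sum>s\<in>{1..2 ^ k}. c s \<omega> $ i * c s \<omega> $ j - ctx_moment $ i $ j\<bar> < ec * 2 ^ k) \<and>
      (\<forall>i j. \<bar>\<Sum>s\<in>{1..2 ^ k}. (real s powr (-\<eta>))\<^sup>2 * (u s \<omega> $ i * u s \<omega> $ j - pert_moment $ i $ j)\<bar>
         < eu * step_sq_sum (2 ^ k)) \<and>
      (\<forall>i j. \<bar>\<Sum>s\<in>{1..2 ^ k}. real s powr (-\<eta>) * (stack (pbar s \<omega>) (c s \<omega>) $ i * u s \<omega> $ j)\<bar>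
         < ex * step_sq_sum (2 ^ k))" for \<omega> k
  have "AE \<omega> in M. \<omega> \<in> space M \<and> eventually (good \<omega>) sequentially"
    using AE_space AE_context_moments[OF e(1)] AE_perturbation_moments[OF e(2)] AE_cross_moments[OF e(3)]
    unfolding good_def by eventually_elim (auto intro: eventually_conj)
  then have "AE \<omega> in M. \<exists>k0. \<forall>k\<ge>k0. \<forall>v. min (lc * \<delta> / (8 * (1 + \<delta>))) (lu / (4 * (1 + \<delta>)))
      * step_sq_sum (2 ^ k) * (v \<bullet> v) \<le> v \<bullet> (design_matrix (2 ^ k) \<omega> *v v)"
  proof (rule eventually_mono, elim conjE)
    fix \<omega> assume \<omega>: "\<omega> \<in> space M" and "eventually (good \<omega>) sequentially"
    then obtain k0 where "\<And>k. k0 \<le> k \<Longrightarrow> good \<omega> k" unfolding eventually_sequentially by blast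
    then have "min (lc * \<delta> / (8 * (1 + \<delta>))) (lu / (4 * (1 + \<delta>)))
        * step_sq_sum (2 ^ k) * (v \<bullet> v) \<le> v \<bullet> (design_matrix (2 ^ k) \<omega> *v v)" if "k0 \<le> k" for k v
      unfolding lc_def lu_def good_def
      by (intro design_matrix_dyadic_ge[where ec=ec and eu=eu and ex=ex, OF \<omega> \<delta>[unfolded lc_def]])
        (use that e in \<open>auto simp: ec_def eu_def ex_def lc_def lu_def\<close>)
    then show "\<exists>k0. \<forall>k\<ge>k0. \<forall>v. min (lc * \<delta> / (8 * (1 + \<delta>))) (lu / (4 * (1 + \<delta>)))
        * step_sq_sum (2 ^ k) * (v \<bullet> v) \<le> v \<bullet> (design_matrix (2 ^ k) \<omega> *v v)" by blast
  qed
  moreover have "0 < min (lc * \<delta> / (8 * (1 + \<delta>))) (lu / (4 * (1 + \<delta>)))" using lc lu \<delta> by simp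
  ultimately show thesis using that by blast
qed

lemma min_eig_design_matrix_ge:
  assumes "0 \<le> K" and dyadic: "\<And>k v. k0 \<le> k \<Longrightarrow> K * step_sq_sum (2 ^ k) * (v \<bullet> v) \<le> v \<bullet> (design_matrix (2 ^ k) \<omega> *v v)"
    and t: "2 ^ k0 \<le> t"
  shows "K / 2 * step_sq_sum t \<le> min_eig (design_matrix t \<omega>)"
proof (rule min_eig_ge)
  show "transpose (design_matrix t \<omega>) = design_matrix t \<omega>"
    unfolding design_matrix_def by (rule transpose_sum_outer)
  fix v :: "real^('m + 'k)"
  have "mono (\<lambda>t. v \<bullet> (design_matrix t \<omega> *v v))"
    unfolding design_matrix_def quadratic_form_sum_outer by (intro monoI sum_mono2) auto
  moreover have "mono (\<lambda>t. step_sq_sum t * (v \<bullet> v))"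
    unfolding step_sq_sum_def by (intro monoI mult_right_mono sum_mono2) auto
  moreover have "step_sq_sum (2 * n) * (v \<bullet> v) \<le> 2 * (step_sq_sum n * (v \<bullet> v))" for n
    unfolding step_sq_sum_def mult.assoc[symmetric]
    by (intro mult_right_mono sum_atLeastAtMost_double_le powr_minus_square_antimono eta_nonneg) auto
  ultimately have "K / 2 * (step_sq_sum t * (v \<bullet> v)) \<le> v \<bullet> (design_matrix t \<omega> *v v)"
    using assms by (intro dyadic_lower_bound_extends[where n=k0]) (auto simp: mult.assoc)
  then show "K / 2 * step_sq_sum t * (v \<bullet> v) \<le> v \<bullet> (design_matrix t \<omega> *v v)" by (simp add: mult.assoc)
qed

end

theorem proposition2:
  fixes M :: "'a measure"
    and F :: "nat \<Rightarrow> 'a measure"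
    and c :: "nat \<Rightarrow> 'a \<Rightarrow> real ^ 'k"
    and u :: "nat \<Rightarrow> 'a \<Rightarrow> real ^ 'm"
    and pbar :: "nat \<Rightarrow> 'a \<Rightarrow> real ^ 'm"
    and \<eta> :: real
  assumes "prob_space M"
    and "0 \<le> \<eta>" and "\<eta> < 1/2"
    \<comment> \<open>filtration of the past\<close>
    and "\<And>s. subalgebra M (F s)"
    and "\<And>s. sets (F s) \<subseteq> sets (F (Suc s))"
    \<comment> \<open>contexts: adapted, i.i.d. (identically distributed, independent of the past), bounded, positive definite second moment\<close>
    and "\<And>s. s \<ge> 1 \<Longrightarrow> c s \<in> borel_measurable (F s)"
    and "\<And>s. s \<ge> 1 \<Longrightarrow> distr M borel (c s) = distr M borel (c 1)"
    and "\<And>s. s \<ge> 1 \<Longrightarrow> prob_space.indep_set M (sets (F (s - 1))) (gen_sets M (c s))"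
    and "\<exists>B. \<forall>s\<ge>1. \<forall>\<omega>\<in>space M. norm (c s \<omega>) \<le> B"
    and "pos_def (prob_space.expectation M (\<lambda>\<omega>. outer (c 1 \<omega>)))"
    \<comment> \<open>certainty-equivalent prices: bounded, determined by c_s and the past\<close>
    and "\<And>s. s \<ge> 1 \<Longrightarrow> pbar s \<in> borel_measurable (past_ctx M F c s)"
    and "\<exists>B. \<forall>s\<ge>1. \<forall>\<omega>\<in>space M. norm (pbar s \<omega>) \<le> B"
    \<comment> \<open>perturbations: adapted, i.i.d., bounded, mean zero, positive definite covariance, independent of c_s and the past\<close>
    and "\<And>s. s \<ge> 1 \<Longrightarrow> u s \<in> borel_measurable (F s)"
    and "\<And>s. s \<ge> 1 \<Longrightarrow> distr M borel (u s) = distr M borel (u 1)"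
    and "\<And>s. s \<ge> 1 \<Longrightarrow> prob_space.indep_set M (sets (past_ctx M F c s)) (gen_sets M (u s))"
    and "\<exists>B. \<forall>s\<ge>1. \<forall>\<omega>\<in>space M. norm (u s \<omega>) \<le> B"
    and "prob_space.expectation M (u 1) = 0"
    and "pos_def (prob_space.expectation M (\<lambda>\<omega>. outer (u 1 \<omega>)))"
  shows "AE \<omega> in M. \<exists>K>0. \<exists>T0. \<forall>t\<ge>T0.
           min_eig (\<Sum>s\<in>{1..t}. outer (stack (pbar s \<omega> + (real s powr (-\<eta>)) *\<^sub>R u s \<omega>) (c s \<omega>)))
             \<ge> K * (\<Sum>s\<in>{1..t}. (real s powr (-\<eta>))\<^sup>2)"
proof -
  interpret pricing_model M F c u pbar \<eta>
    by (intro pricing_model.intro pricing_model_axioms.intro) (fact assms)+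
  obtain K where K: "0 < K" and dyadic: "AE \<omega> in M. \<exists>k0. \<forall>k\<ge>k0. \<forall>v.
      K * step_sq_sum (2 ^ k) * (v \<bullet> v) \<le> v \<bullet> (design_matrix (2 ^ k) \<omega> *v v)"
    by (rule AE_dyadic_design_matrix_ge)
  show ?thesis
    using dyadic
  proof (rule eventually_mono)
    fix \<omega> assume "\<exists>k0. \<forall>k\<ge>k0. \<forall>v. K * step_sq_sum (2 ^ k) * (v \<bullet> v) \<le> v \<bullet> (design_matrix (2 ^ k) \<omega> *v v)"
    then obtain k0 where "\<And>k v. k0 \<le> k \<Longrightarrow> K * step_sq_sum (2 ^ k) * (v \<bullet> v) \<le> v \<bullet> (design_matrix (2 ^ k) \<omega> *v v)"
      by blast
    then have "\<forall>t\<ge>2 ^ k0. K / 2 * step_sq_sum t \<le> min_eig (design_matrix t \<omega>)"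
      using K by (intro allI impI min_eig_design_matrix_ge) auto
    with K show "\<exists>K>0. \<exists>T0. \<forall>t\<ge>T0.
        min_eig (\<Sum>s\<in>{1..t}. outer (stack (pbar s \<omega> + (real s powr (-\<eta>)) *\<^sub>R u s \<omega>) (c s \<omega>)))
          \<ge> K * (\<Sum>s\<in>{1..t}. (real s powr (-\<eta>))\<^sup>2)"
      unfolding design_matrix_def step_sq_sum_def by (intro exI[of _ "K / 2"]) auto
  qed
qed

end
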